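(* Let $S,T$ be totally ordered sets and $M\colon S\times T\to\mathbf{Vec}$ pointwise finite-dimensional and indecomposable, such that for all $x\le x'$ in $S$, $y\le y'$ in $T$ the sequence $0\to M_{(x,y)}\to M_{(x,y')}\oplus M_{(x',y)}\to M_{(x',y')}\to0$ (maps $(M((x,y)\le(x,y')),M((x,y)\le(x',y)))$ and the difference of the two maps into $M_{(x',y')}$) is exact. If $\operatorname{Im}M^{\leftarrow}\cap\ker M^{\rightarrow}\neq0$ or $\operatorname{Im}M^{\downarrow}\cap\ker M^{\uparrow}\neq0$, then $M\cong k_B$ for a block $B$ of type db.
   Context: For $(p_1,p_2)\in S\times T$: $\operatorname{Im}M^{\leftarrow}_{(p_1,p_2)}=\bigcap_{q\le p_1}\operatorname{Im}M((q,p_2)\le(p_1,p_2))$, $\operatorname{Im}M^{\downarrow}_{(p_1,p_2)}=\bigcap_{q\le p_2}\operatorname{Im}M((p_1,q)\le(p_1,p_2))$, $\ker M^{\rightarrow}_{(p_1,p_2)}=\bigcup_{q\ge p_1}\ker M((p_1,p_2)\le(q,p_2))$, $\ker M^{\uparrow}_{(p_1,p_2)}=\bigcup_{q\ge p_2}\ker M((p_1,p_2)\le(p_1,q))$ (submodules of $M$). A block of type db is $J_S\times J_T$ with $J_S\subseteq S$, $J_T\subseteq T$ non-empty downward-closed. $k_B$ is $k$ on $B$, $0$ elsewhere, identity maps within $B$, zero otherwise. *)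

theory Defs
  imports Complex_Main
begin

text \<open>A module is given by an ambient k-vector space
type 'v (with scalar multiplication scale), a family of subspaces V p (the spaces M_p) and
structure maps f p q : M_p \<rightarrow> M_q for p \<le> q.\<close>

definition pleq :: "'s::linorder \<times> 't::linorder \<Rightarrow> 's \<times> 't \<Rightarrow> bool" where
  "pleq p q \<longleftrightarrow> fst p \<le> fst q \<and> snd p \<le> snd q"

definition lin_on :: "('k::field \<Rightarrow> 'v::ab_group_add \<Rightarrow> 'v) \<Rightarrow> ('k \<Rightarrow> 'w::ab_group_add \<Rightarrow> 'w)
    \<Rightarrow> 'v set \<Rightarrow> ('v \<Rightarrow> 'w) \<Rightarrow> bool" where
  "lin_on sc1 sc2 A g \<longleftrightarrow> (\<forall>x\<in>A. \<forall>y\<in>A. g (x + y) = g x + g y) \<and> (\<forall>c. \<forall>x\<in>A. g (sc1 c x) = sc2 c (g x))"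

definition pmod :: "('k::field \<Rightarrow> 'v::ab_group_add \<Rightarrow> 'v) \<Rightarrow> ('s::linorder \<times> 't::linorder \<Rightarrow> 'v set)
    \<Rightarrow> ('s \<times> 't \<Rightarrow> 's \<times> 't \<Rightarrow> 'v \<Rightarrow> 'v) \<Rightarrow> bool" where
  "pmod sc V f \<longleftrightarrow> vector_space sc \<and> (\<forall>p. module.subspace sc (V p)) \<and>
     (\<forall>p q. pleq p q \<longrightarrow> f p q ` V p \<subseteq> V q \<and> lin_on sc sc (V p) (f p q)) \<and>
     (\<forall>p. \<forall>v\<in>V p. f p p v = v) \<and>
     (\<forall>p q r. pleq p q \<longrightarrow> pleq q r \<longrightarrow> (\<forall>v\<in>V p. f q r (f p q v) = f p r v))"

definition pfd :: "('k::field \<Rightarrow> 'v::ab_group_add \<Rightarrow> 'v) \<Rightarrow> ('s::linorder \<times> 't::linorder \<Rightarrow> 'v set) \<Rightarrow> bool" where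
  "pfd sc V \<longleftrightarrow> (\<forall>p. \<exists>B. finite B \<and> B \<subseteq> V p \<and> module.span sc B = V p)"

definition submod :: "('k::field \<Rightarrow> 'v::ab_group_add \<Rightarrow> 'v) \<Rightarrow> ('s::linorder \<times> 't::linorder \<Rightarrow> 'v set)
    \<Rightarrow> ('s \<times> 't \<Rightarrow> 's \<times> 't \<Rightarrow> 'v \<Rightarrow> 'v) \<Rightarrow> ('s \<times> 't \<Rightarrow> 'v set) \<Rightarrow> bool" where
  "submod sc V f N \<longleftrightarrow> (\<forall>p. N p \<subseteq> V p \<and> module.subspace sc (N p)) \<and>
     (\<forall>p q. pleq p q \<longrightarrow> f p q ` N p \<subseteq> N q)"

definition nonzero_mod :: "('s \<times> 't \<Rightarrow> 'v::zero set) \<Rightarrow> bool" where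
  "nonzero_mod N \<longleftrightarrow> (\<exists>p. N p \<noteq> {0})"

definition indecomposable :: "('k::field \<Rightarrow> 'v::ab_group_add \<Rightarrow> 'v) \<Rightarrow> ('s::linorder \<times> 't::linorder \<Rightarrow> 'v set)
    \<Rightarrow> ('s \<times> 't \<Rightarrow> 's \<times> 't \<Rightarrow> 'v \<Rightarrow> 'v) \<Rightarrow> bool" where
  "indecomposable sc V f \<longleftrightarrow> nonzero_mod V \<and>
     (\<forall>N1 N2. submod sc V f N1 \<and> submod sc V f N2 \<and>
        (\<forall>p. N1 p \<inter> N2 p = {0} \<and> (\<forall>v\<in>V p. \<exists>a\<in>N1 p. \<exists>b\<in>N2 p. v = a + b))
        \<longrightarrow> \<not> nonzero_mod N1 \<or> \<not> nonzero_mod N2)"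

text \<open>Exactness of 0 \<rightarrow> M(x,y) \<rightarrow> M(x,y') \<oplus> M(x',y) \<rightarrow> M(x',y') \<rightarrow> 0, first map
v \<mapsto> (M((x,y)\<le>(x,y')) v, M((x,y)\<le>(x',y)) v), second map
(a,b) \<mapsto> M((x,y')\<le>(x',y')) a - M((x',y)\<le>(x',y')) b.\<close>
definition square_exact :: "('s \<times> 't \<Rightarrow> 'v::ab_group_add set) \<Rightarrow> ('s \<times> 't \<Rightarrow> 's \<times> 't \<Rightarrow> 'v \<Rightarrow> 'v)
    \<Rightarrow> 's \<Rightarrow> 's \<Rightarrow> 't \<Rightarrow> 't \<Rightarrow> bool" where
  "square_exact V f x x' y y' \<longleftrightarrow>
     (let \<alpha> = f (x,y) (x,y'); \<beta> = f (x,y) (x',y); \<gamma> = f (x,y') (x',y'); \<delta> = f (x',y) (x',y') in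
       (\<forall>v\<in>V (x,y). \<alpha> v = 0 \<and> \<beta> v = 0 \<longrightarrow> v = 0) \<and>
       (\<forall>a\<in>V (x,y'). \<forall>b\<in>V (x',y). \<gamma> a - \<delta> b = 0 \<longleftrightarrow> (\<exists>v\<in>V (x,y). a = \<alpha> v \<and> b = \<beta> v)) \<and>
       (\<forall>w\<in>V (x',y'). \<exists>a\<in>V (x,y'). \<exists>b\<in>V (x',y). w = \<gamma> a - \<delta> b))"

definition im_left :: "('s::linorder \<times> 't::linorder \<Rightarrow> 'v set) \<Rightarrow> ('s \<times> 't \<Rightarrow> 's \<times> 't \<Rightarrow> 'v \<Rightarrow> 'v)
    \<Rightarrow> 's \<times> 't \<Rightarrow> 'v set" where
  "im_left V f p = (\<Inter>q\<in>{q. q \<le> fst p}. f (q, snd p) p ` V (q, snd p))"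

definition im_down :: "('s::linorder \<times> 't::linorder \<Rightarrow> 'v set) \<Rightarrow> ('s \<times> 't \<Rightarrow> 's \<times> 't \<Rightarrow> 'v \<Rightarrow> 'v)
    \<Rightarrow> 's \<times> 't \<Rightarrow> 'v set" where
  "im_down V f p = (\<Inter>q\<in>{q. q \<le> snd p}. f (fst p, q) p ` V (fst p, q))"

definition ker_right :: "('s::linorder \<times> 't::linorder \<Rightarrow> 'v::zero set) \<Rightarrow> ('s \<times> 't \<Rightarrow> 's \<times> 't \<Rightarrow> 'v \<Rightarrow> 'v)
    \<Rightarrow> 's \<times> 't \<Rightarrow> 'v set" where
  "ker_right V f p = (\<Union>q\<in>{q. fst p \<le> q}. {v\<in>V p. f p (q, snd p) v = 0})"

definition ker_up :: "('s::linorder \<times> 't::linorder \<Rightarrow> 'v::zero set) \<Rightarrow> ('s \<times> 't \<Rightarrow> 's \<times> 't \<Rightarrow> 'v \<Rightarrow> 'v)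
    \<Rightarrow> 's \<times> 't \<Rightarrow> 'v set" where
  "ker_up V f p = (\<Union>q\<in>{q. snd p \<le> q}. {v\<in>V p. f p (fst p, q) v = 0})"

text \<open>Downward-closed non-empty subsets; blocks of type db; the interval module k_B
(realised with ambient space 'k itself).\<close>
definition down_closed :: "'a::order set \<Rightarrow> bool" where
  "down_closed J \<longleftrightarrow> J \<noteq> {} \<and> (\<forall>a\<in>J. \<forall>b. b \<le> a \<longrightarrow> b \<in> J)"

definition db_block :: "('s::linorder \<times> 't::linorder) set \<Rightarrow> bool" where
  "db_block B \<longleftrightarrow> (\<exists>JS JT. down_closed JS \<and> down_closed JT \<and> B = JS \<times> JT)"

definition kB_space :: "('s \<times> 't) set \<Rightarrow> 's \<times> 't \<Rightarrow> 'k::field set" where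
  "kB_space B p = (if p \<in> B then UNIV else {0})"

definition kB_map :: "('s \<times> 't) set \<Rightarrow> 's \<times> 't \<Rightarrow> 's \<times> 't \<Rightarrow> 'k::field \<Rightarrow> 'k" where
  "kB_map B p q = (if p \<in> B \<and> q \<in> B then id else (\<lambda>_. 0))"

definition pmod_iso :: "('k::field \<Rightarrow> 'v::ab_group_add \<Rightarrow> 'v) \<Rightarrow> ('s::linorder \<times> 't::linorder \<Rightarrow> 'v set)
    \<Rightarrow> ('s \<times> 't \<Rightarrow> 's \<times> 't \<Rightarrow> 'v \<Rightarrow> 'v)
    \<Rightarrow> ('k \<Rightarrow> 'w::ab_group_add \<Rightarrow> 'w) \<Rightarrow> ('s \<times> 't \<Rightarrow> 'w set) \<Rightarrow> ('s \<times> 't \<Rightarrow> 's \<times> 't \<Rightarrow> 'w \<Rightarrow> 'w) \<Rightarrow> bool" where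
  "pmod_iso sc V f sc' W g \<longleftrightarrow> (\<exists>\<phi>. (\<forall>p. bij_betw (\<phi> p) (V p) (W p) \<and> lin_on sc sc' (V p) (\<phi> p)) \<and>
     (\<forall>p q. pleq p q \<longrightarrow> (\<forall>v\<in>V p. \<phi> q (f p q v) = g p q (\<phi> p v))))"

end

theory Submission
  imports Defs
begin

text \<open>
  Let \<open>v \<noteq> 0\<close> lie in the image of every map into \<open>p\<close> from the left and die under the map
  to some column \<open>c\<close> on the right. By exactness of the squares, \<open>v\<close> lifts to every point
  \<open>q \<le> p\<close> by a vector that also dies at column \<open>c\<close>; these lifts form non-empty affine
  subspaces of finite-dimensional spaces, and such an inverse system has a compatible family,
  because a minimal subsystem (descending chain condition plus Zorn) consists of singletons.
  Transporting the family from the meet with \<open>p\<close> gives a global section \<open>e\<close> with \<open>e p = v\<close>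
  that dies to the right everywhere, and injectivity in the exact squares makes its support a
  block \<open>J \<times> T\<close>. A maximal submodule meeting the line \<open>k e\<close> trivially is a complement of it,
  since the support of \<open>e\<close> is closed under joins; so indecomposability forces \<open>M = k e \<cong> k\<^sub>B\<close>.
  The other hypothesis is the same one for the transposed module.
\<close>

section \<open>Inverse limits of Artinian systems\<close>

lemma Zorn_order_max:
  fixes F :: "'a::order set"
  assumes "\<And>C. C \<subseteq> F \<Longrightarrow> (\<And>x y. x \<in> C \<Longrightarrow> y \<in> C \<Longrightarrow> x \<le> y \<or> y \<le> x)
      \<Longrightarrow> \<exists>u\<in>F. \<forall>x\<in>C. x \<le> u"
  shows "\<exists>m\<in>F. \<forall>x\<in>F. m \<le> x \<longrightarrow> x = m"
proof (rule predicate_Zorn)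
  show "partial_order_on F (relation_of (\<le>) F)"
    by (rule partial_order_on_relation_ofI) auto
  fix C assume "C \<in> Chains (relation_of (\<le>) F)"
  then show "\<exists>u\<in>F. \<forall>x\<in>C. x \<le> u"
    by (intro assms) (auto simp: Chains_def relation_of_def)
qed

lemma Zorn_order_min:
  fixes F :: "'a::order set"
  assumes "\<And>C. C \<subseteq> F \<Longrightarrow> (\<And>x y. x \<in> C \<Longrightarrow> y \<in> C \<Longrightarrow> x \<le> y \<or> y \<le> x)
      \<Longrightarrow> \<exists>u\<in>F. \<forall>x\<in>C. u \<le> x"
  shows "\<exists>m\<in>F. \<forall>x\<in>F. x \<le> m \<longrightarrow> x = m"
proof (rule predicate_Zorn)
  show "partial_order_on F (relation_of (\<ge>) F)"
    by (rule partial_order_on_relation_ofI) auto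
  fix C assume "C \<in> Chains (relation_of (\<ge>) F)"
  then show "\<exists>u\<in>F. \<forall>x\<in>C. x \<ge> u"
    by (intro assms) (auto simp: Chains_def relation_of_def)
qed

lemma Inter_directed_attained:
  fixes \<mu> :: "'a set \<Rightarrow> nat"
  assumes "F \<noteq> {}"
    and less: "\<And>A B. A \<in> F \<Longrightarrow> B \<in> F \<Longrightarrow> B \<subset> A \<Longrightarrow> \<mu> B < \<mu> A"
    and directed: "\<And>A B. A \<in> F \<Longrightarrow> B \<in> F \<Longrightarrow> \<exists>D\<in>F. D \<subseteq> A \<and> D \<subseteq> B"
  shows "\<Inter>F \<in> F"
proof -
  obtain A where A: "A \<in> F" and least: "\<And>B. B \<in> F \<Longrightarrow> \<mu> A \<le> \<mu> B"
    using assms(1) ex_has_least_nat[of "\<lambda>A. A \<in> F" _ \<mu>] by blast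
  have "A \<subseteq> B" if B: "B \<in> F" for B
  proof -
    obtain D where D: "D \<in> F" "D \<subseteq> A" "D \<subseteq> B" using directed[OF A B] by blast
    have "D = A" using less[OF A D(1)] least[OF D(1)] D(2) by fastforce
    then show ?thesis using D(3) by simp
  qed
  then have "\<Inter>F = A" using A by blast
  then show ?thesis using A by simp
qed

locale inverse_system =
  fixes I :: "'i set" and le :: "'i \<Rightarrow> 'i \<Rightarrow> bool"
    and P :: "'i \<Rightarrow> 'a set" and g :: "'i \<Rightarrow> 'i \<Rightarrow> 'a \<Rightarrow> 'a"
  assumes le_refl: "i \<in> I \<Longrightarrow> le i i"
    and le_trans: "i \<in> I \<Longrightarrow> j \<in> I \<Longrightarrow> k \<in> I \<Longrightarrow> le i j \<Longrightarrow> le j k \<Longrightarrow> le i k"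
    and directed: "i \<in> I \<Longrightarrow> j \<in> I \<Longrightarrow> \<exists>k\<in>I. le i k \<and> le j k"
    and g_id: "i \<in> I \<Longrightarrow> x \<in> P i \<Longrightarrow> g i i x = x"
    and g_comp: "i \<in> I \<Longrightarrow> j \<in> I \<Longrightarrow> k \<in> I \<Longrightarrow> le i j \<Longrightarrow> le j k \<Longrightarrow> x \<in> P k
      \<Longrightarrow> g i j (g j k x) = g i k x"
    and g_maps: "i \<in> I \<Longrightarrow> j \<in> I \<Longrightarrow> le i j \<Longrightarrow> x \<in> P j \<Longrightarrow> g i j x \<in> P i"
begin

definition compatible_family :: "('i \<Rightarrow> 'a) \<Rightarrow> bool" where
  "compatible_family s \<longleftrightarrow> (\<forall>i\<in>I. s i \<in> P i \<and> (\<forall>j\<in>I. le i j \<longrightarrow> g i j (s j) = s i))"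

lemma g_image_comp:
  assumes "i \<in> I" "j \<in> I" "k \<in> I" "le i j" "le j k" "A \<subseteq> P k"
  shows "g i k ` A = g i j ` g j k ` A"
  using assms g_comp by (auto simp: image_image intro!: image_cong)

end

locale artinian_inverse_system = inverse_system I le P g
  for I :: "'i set" and le and P :: "'i \<Rightarrow> 'a set" and g +
  fixes Adm :: "'i \<Rightarrow> 'a set set" and rk :: "'i \<Rightarrow> 'a set \<Rightarrow> nat"
  assumes P_adm: "i \<in> I \<Longrightarrow> P i \<in> Adm i"
    and P_nonempty: "i \<in> I \<Longrightarrow> P i \<noteq> {}"
    and adm_subset: "i \<in> I \<Longrightarrow> A \<in> Adm i \<Longrightarrow> A \<subseteq> P i"
    and adm_image: "i \<in> I \<Longrightarrow> j \<in> I \<Longrightarrow> le i j \<Longrightarrow> A \<in> Adm j \<Longrightarrow> A \<noteq> {}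
      \<Longrightarrow> g i j ` A \<in> Adm i"
    and adm_fibre: "i \<in> I \<Longrightarrow> j \<in> I \<Longrightarrow> le i j \<Longrightarrow> A \<in> Adm j \<Longrightarrow> A \<inter> {z. g i j z = x} \<noteq> {}
      \<Longrightarrow> A \<inter> {z. g i j z = x} \<in> Adm j"
    and rk_less: "i \<in> I \<Longrightarrow> A \<in> Adm i \<Longrightarrow> B \<in> Adm i \<Longrightarrow> B \<noteq> {} \<Longrightarrow> B \<subset> A
      \<Longrightarrow> rk i B < rk i A"
begin

definition subsystem :: "('i \<Rightarrow> 'a set) \<Rightarrow> bool" where
  "subsystem Q \<longleftrightarrow>
    (\<forall>i\<in>I. Q i \<in> Adm i \<and> Q i \<noteq> {} \<and> (\<forall>j\<in>I. le i j \<longrightarrow> g i j ` Q j \<subseteq> Q i))"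

definition minimal_subsystem :: "('i \<Rightarrow> 'a set) \<Rightarrow> bool" where
  "minimal_subsystem Q \<longleftrightarrow> subsystem Q \<and> (\<forall>Q'. subsystem Q' \<longrightarrow> Q' \<le> Q \<longrightarrow> Q' = Q)"

lemma subsystem_subset: "subsystem Q \<Longrightarrow> i \<in> I \<Longrightarrow> Q i \<subseteq> P i"
  using adm_subset unfolding subsystem_def by blast

lemma Inter_adm_directed_attained:
  assumes "i \<in> I" "F \<subseteq> Adm i" "F \<noteq> {}" "{} \<notin> F"
    and "\<And>A B. A \<in> F \<Longrightarrow> B \<in> F \<Longrightarrow> \<exists>D\<in>F. D \<subseteq> A \<and> D \<subseteq> B"
  shows "\<Inter>F \<in> F"
  using Inter_directed_attained[of F "rk i"] rk_less assms by blast

lemma minimal_subsystem_exists: "\<exists>Q. minimal_subsystem Q"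
proof -
  have "\<exists>Q\<in>Collect subsystem. \<forall>Q'\<in>Collect subsystem. Q' \<le> Q \<longrightarrow> Q' = Q"
  proof (rule Zorn_order_min)
    fix C assume C: "C \<subseteq> Collect subsystem"
      and chain: "\<And>Q Q'. Q \<in> C \<Longrightarrow> Q' \<in> C \<Longrightarrow> Q \<le> Q' \<or> Q' \<le> Q"
    show "\<exists>u\<in>Collect subsystem. \<forall>Q\<in>C. u \<le> Q"
    proof (cases "C = {}")
      case True
      then show ?thesis
        using P_adm P_nonempty g_maps unfolding subsystem_def by (intro bexI[of _ P]) auto
    next
      case False
      define u where "u i = (\<Inter>Q\<in>C. Q i)" for i
      have u_attained: "\<exists>Q\<in>C. u i = Q i" if "i \<in> I" for i
      proof -
        have "\<Inter>((\<lambda>Q. Q i) ` C) \<in> (\<lambda>Q. Q i) ` C"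
        proof (rule Inter_adm_directed_attained[OF that])
          fix A B assume "A \<in> (\<lambda>Q. Q i) ` C" "B \<in> (\<lambda>Q. Q i) ` C"
          then obtain Q Q' where Q: "Q \<in> C" "Q' \<in> C" "A = Q i" "B = Q' i" by blast
          moreover have "Q i \<subseteq> Q' i \<or> Q' i \<subseteq> Q i" using chain[OF Q(1,2)] by (auto simp: le_fun_def)
          ultimately show "\<exists>D\<in>(\<lambda>Q. Q i) ` C. D \<subseteq> A \<and> D \<subseteq> B" by blast
        qed (use C False that in \<open>fastforce simp: subsystem_def\<close>)+
        then show ?thesis by (auto simp: u_def)
      qed
      have "subsystem u"
        unfolding subsystem_def
      proof (intro ballI conjI impI)
        fix i assume i: "i \<in> I"
        then obtain Q where "Q \<in> C" "u i = Q i" using u_attained by blast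
        then show "u i \<in> Adm i" "u i \<noteq> {}" using C i by (auto simp: subsystem_def)
        fix j assume "j \<in> I" "le i j"
        then show "g i j ` u j \<subseteq> u i"
          using C i by (fastforce simp: u_def subsystem_def)
      qed
      moreover have "\<forall>Q\<in>C. u \<le> Q" by (auto simp: u_def le_fun_def)
      ultimately show ?thesis by blast
    qed
  qed
  then show ?thesis unfolding minimal_subsystem_def by auto
qed

definition images_above :: "'i \<Rightarrow> ('i \<Rightarrow> 'a set) \<Rightarrow> 'i \<Rightarrow> 'a set set" where
  "images_above i0 A i = (\<lambda>k. g i k ` A k) ` {k \<in> I. le i k \<and> le i0 k}"

context
  fixes i0 :: 'i and A :: "'i \<Rightarrow> 'a set"
  assumes i0: "i0 \<in> I"
    and A_adm: "\<And>k. k \<in> I \<Longrightarrow> le i0 k \<Longrightarrow> A k \<in> Adm k \<and> A k \<noteq> {}"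
    and A_maps: "\<And>k l. k \<in> I \<Longrightarrow> l \<in> I \<Longrightarrow> le i0 k \<Longrightarrow> le k l \<Longrightarrow> g k l ` A l \<subseteq> A k"
begin

lemma images_shrink:
  assumes "i \<in> I" "k \<in> I" "l \<in> I" "le i k" "le k l" "le i0 k"
  shows "g i l ` A l \<subseteq> g i k ` A k"
proof -
  have "le i0 l" using le_trans[OF i0 assms(2,3,6,5)] .
  then have "g i l ` A l = g i k ` g k l ` A l"
    using assms A_adm adm_subset by (intro g_image_comp) auto
  also have "\<dots> \<subseteq> g i k ` A k" using assms A_maps by (intro image_mono) auto
  finally show ?thesis .
qed

lemma Inter_images_above_attained:
  assumes i: "i \<in> I"
  shows "\<Inter>(images_above i0 A i) \<in> images_above i0 A i"
proof (rule Inter_adm_directed_attained[OF i])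
  have "g i k ` A k \<in> Adm i \<and> g i k ` A k \<noteq> {}" if "k \<in> I" "le i k" "le i0 k" for k
    using that A_adm[of k] adm_image[OF i, of k "A k"] by auto
  then show "images_above i0 A i \<subseteq> Adm i" "{} \<notin> images_above i0 A i"
    unfolding images_above_def by auto
  show "images_above i0 A i \<noteq> {}"
    using directed[OF i i0] unfolding images_above_def by auto
  fix B1 B2 assume "B1 \<in> images_above i0 A i" "B2 \<in> images_above i0 A i"
  then obtain k1 k2 where k12: "k1 \<in> I" "le i k1" "le i0 k1" "B1 = g i k1 ` A k1"
    "k2 \<in> I" "le i k2" "le i0 k2" "B2 = g i k2 ` A k2"
    unfolding images_above_def by blast
  obtain l where l: "l \<in> I" "le k1 l" "le k2 l" using directed[OF k12(1,5)] by blast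
  have "le i l" "le i0 l"
    using le_trans[OF i k12(1) l(1) k12(2) l(2)] le_trans[OF i0 k12(1) l(1) k12(3) l(2)] .
  then have "g i l ` A l \<in> images_above i0 A i" using l(1) unfolding images_above_def by blast
  moreover have "g i l ` A l \<subseteq> B1" "g i l ` A l \<subseteq> B2"
    using images_shrink[OF i k12(1) l(1) k12(2) l(2) k12(3)]
      images_shrink[OF i k12(5) l(1) k12(6) l(3) k12(7)] k12 by simp_all
  ultimately show "\<exists>D\<in>images_above i0 A i. D \<subseteq> B1 \<and> D \<subseteq> B2" by blast
qed

lemma subsystem_Inter_images_above: "subsystem (\<lambda>i. \<Inter>(images_above i0 A i))"
  unfolding subsystem_def
proof (intro ballI conjI impI)
  fix i assume i: "i \<in> I"
  obtain k where k: "k \<in> I" "le i k" "le i0 k" "\<Inter>(images_above i0 A i) = g i k ` A k"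
    using Inter_images_above_attained[OF i] unfolding images_above_def by auto
  then show "\<Inter>(images_above i0 A i) \<in> Adm i" "\<Inter>(images_above i0 A i) \<noteq> {}"
    using A_adm[of k] adm_image[OF i k(1,2), of "A k"] by auto
  fix j assume j: "j \<in> I" "le i j"
  show "g i j ` \<Inter>(images_above i0 A j) \<subseteq> \<Inter>(images_above i0 A i)"
  proof (intro subsetI InterI)
    fix y B assume y: "y \<in> g i j ` \<Inter>(images_above i0 A j)" and "B \<in> images_above i0 A i"
    then obtain k where k: "k \<in> I" "le i k" "le i0 k" "B = g i k ` A k"
      unfolding images_above_def by blast
    obtain l where l: "l \<in> I" "le j l" "le k l" using directed[OF j(1) k(1)] by blast
    have "le i0 l" using le_trans[OF i0 k(1) l(1) k(3) l(3)] .
    then have "y \<in> g i j ` g j l ` A l"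
      using y l(1,2) unfolding images_above_def by blast
    also have "\<dots> = g i l ` A l"
      using i j l \<open>le i0 l\<close> A_adm adm_subset by (intro g_image_comp[symmetric]) auto
    also have "\<dots> \<subseteq> B" using images_shrink[OF i k(1) l(1) k(2) l(3) k(3)] k(4) by simp
    finally show "y \<in> B" .
  qed
qed

end

text \<open>The intersected images of a family below a minimal subsystem form a
subsystem below it, so they recover the minimal subsystem.\<close>

lemma minimal_subsystem_below_images:
  assumes Q: "minimal_subsystem Q" and i0: "i0 \<in> I"
    and A: "\<And>k. k \<in> I \<Longrightarrow> le i0 k \<Longrightarrow> A k \<in> Adm k \<and> A k \<noteq> {} \<and> A k \<subseteq> Q k"
    and A_maps: "\<And>k l. k \<in> I \<Longrightarrow> l \<in> I \<Longrightarrow> le i0 k \<Longrightarrow> le k l \<Longrightarrow> g k l ` A l \<subseteq> A k"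
    and i: "i \<in> I" and k: "k \<in> I" "le i k" "le i0 k"
  shows "Q i \<subseteq> g i k ` A k"
proof -
  have Q_sub: "subsystem Q" using Q by (simp add: minimal_subsystem_def)
  define R where "R i = (if i \<in> I then \<Inter>(images_above i0 A i) else Q i)" for i
  have "subsystem R"
    using subsystem_Inter_images_above[OF i0 _ A_maps] A unfolding subsystem_def R_def by simp
  moreover have "R i \<subseteq> Q i" for i
  proof (cases "i \<in> I")
    case True
    then obtain k where k: "k \<in> I" "le i k" "le i0 k" "R i = g i k ` A k"
      using Inter_images_above_attained[OF i0 _ A_maps True] A
      unfolding R_def images_above_def by auto
    then have "R i \<subseteq> g i k ` Q k" using A by blast
    also have "\<dots> \<subseteq> Q i" using Q_sub True k by (auto simp: subsystem_def)
    finally show ?thesis .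
  qed (simp add: R_def)
  ultimately have "R = Q" using Q by (simp add: minimal_subsystem_def le_fun_def)
  then have "Q i = R i" by simp
  also have "\<dots> = \<Inter>(images_above i0 A i)" using i by (simp add: R_def)
  also have "\<dots> \<subseteq> g i k ` A k" using k unfolding images_above_def by blast
  finally show ?thesis .
qed

lemma minimal_subsystem_surjective:
  assumes Q: "minimal_subsystem Q" and "i \<in> I" "j \<in> I" "le i j"
  shows "g i j ` Q j = Q i"
proof
  have "subsystem Q" using Q by (simp add: minimal_subsystem_def)
  then show "g i j ` Q j \<subseteq> Q i" using assms by (simp add: subsystem_def)
  show "Q i \<subseteq> g i j ` Q j"
    using assms \<open>subsystem Q\<close>
    by (intro minimal_subsystem_below_images[where i0 = i and A = Q]) (auto simp: subsystem_def)
qed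

lemma minimal_subsystem_singleton:
  assumes Q: "minimal_subsystem Q" and i0: "i0 \<in> I" and x: "x \<in> Q i0"
  shows "Q i0 = {x}"
proof -
  have Q_sub: "subsystem Q" using Q by (simp add: minimal_subsystem_def)
  define A where "A k = Q k \<inter> {z. g i0 k z = x}" for k
  have A_nonempty: "A k \<noteq> {}" if "k \<in> I" "le i0 k" for k
  proof -
    have "x \<in> g i0 k ` Q k" using x minimal_subsystem_surjective[OF Q i0 that] by simp
    then show ?thesis by (auto simp: A_def)
  qed
  have "Q i0 \<subseteq> g i0 i0 ` A i0"
  proof (rule minimal_subsystem_below_images[OF Q i0])
    fix k assume k: "k \<in> I" "le i0 k"
    show "A k \<in> Adm k \<and> A k \<noteq> {} \<and> A k \<subseteq> Q k"
      using adm_fibre[OF i0 k] Q_sub A_nonempty[OF k] k by (auto simp: A_def subsystem_def)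
  next
    fix k l assume kl: "k \<in> I" "l \<in> I" "le i0 k" "le k l"
    show "g k l ` A l \<subseteq> A k"
    proof
      fix y assume "y \<in> g k l ` A l"
      then obtain z where z: "z \<in> Q l" "g i0 l z = x" "y = g k l z" by (auto simp: A_def)
      have "g i0 k y = x"
        using z g_comp[OF i0 kl] subsystem_subset[OF Q_sub kl(2)] by auto
      moreover have "y \<in> Q k" using z Q_sub kl by (auto simp: subsystem_def)
      ultimately show "y \<in> A k" by (simp add: A_def)
    qed
  qed (use i0 le_refl in auto)
  also have "\<dots> \<subseteq> {x}" by (auto simp: A_def)
  finally show ?thesis using x by blast
qed

lemma compatible_family_exists: "\<exists>s. compatible_family s"
proof -
  obtain Q where Q: "minimal_subsystem Q" using minimal_subsystem_exists by blast
  then have Q_sub: "subsystem Q" by (simp add: minimal_subsystem_def)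
  define s where "s i = (SOME x. x \<in> Q i)" for i
  have s: "s i \<in> Q i" if "i \<in> I" for i
    using Q_sub that unfolding s_def subsystem_def by (simp add: some_in_eq)
  have "g i j (s j) = s i" if "i \<in> I" "j \<in> I" "le i j" for i j
  proof -
    have "g i j (s j) \<in> Q i" using Q_sub s[OF that(2)] that by (auto simp: subsystem_def)
    then show ?thesis using minimal_subsystem_singleton[OF Q that(1) s[OF that(1)]] by simp
  qed
  then show ?thesis
    using s subsystem_subset[OF Q_sub] unfolding compatible_family_def by blast
qed

end

section \<open>Affine subspaces\<close>

definition affine_in :: "('a::field \<Rightarrow> 'b::ab_group_add \<Rightarrow> 'b) \<Rightarrow> 'b set \<Rightarrow> 'b set \<Rightarrow> bool" where
  "affine_in sc W A \<longleftrightarrow> (\<exists>z\<in>W. \<exists>U. module.subspace sc U \<and> U \<subseteq> W \<and> A = (+) z ` U)"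

context vector_space
begin

lemma dim_less_of_psubset:
  assumes "finite F" "subspace U" "subspace U'" "U \<subset> U'" "U' \<subseteq> span F"
  shows "dim U < dim U'"
proof -
  obtain B where B: "B \<subseteq> U" "independent B" "U \<subseteq> span B" "card B = dim U"
    using basis_exists[of U] by blast
  obtain B' where B': "B' \<subseteq> U'" "independent B'" "U' \<subseteq> span B'" "card B' = dim U'"
    using basis_exists[of U'] by blast
  obtain x where x: "x \<in> U'" "x \<notin> U" using assms(4) by blast
  have "x \<notin> span B" using span_minimal[OF B(1) assms(2)] x(2) by blast
  then have ind: "independent (insert x B)" using B(2) by (rule independent_insertI)
  have "B' \<subseteq> span F" using B'(1) assms(5) by blast
  then have fin: "finite B'" using independent_span_bound[OF assms(1) B'(2)] by blast
  have "insert x B \<subseteq> span B'" using x(1) B(1) assms(4) B'(3) by blast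
  with fin ind have bound: "finite (insert x B) \<and> card (insert x B) \<le> card B'"
    by (rule independent_span_bound)
  have "x \<notin> B" using x(2) B(1) by blast
  then have "card (insert x B) = Suc (card B)" using bound by simp
  then show ?thesis using bound B(4) B'(4) by simp
qed

lemma lin_on_0: "subspace W \<Longrightarrow> lin_on scale scale W h \<Longrightarrow> h 0 = 0"
  using subspace_0 unfolding lin_on_def by (metis add_cancel_right_right)

lemma lin_on_diff:
  assumes "subspace W" "lin_on scale scale W h" "x \<in> W" "y \<in> W"
  shows "h (x - y) = h x - h y"
proof -
  have "h x = h ((x - y) + y)" by simp
  also have "\<dots> = h (x - y) + h y"
    using assms subspace_diff unfolding lin_on_def by blast
  finally show ?thesis by (simp add: algebra_simps)
qed

lemma subspace_image_lin_on:
  assumes U: "subspace U" "U \<subseteq> W" and h: "lin_on scale scale W h"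
  shows "subspace (h ` U)"
proof (rule subspaceI)
  have h_add: "h (a + b) = h a + h b" if "a \<in> U" "b \<in> U" for a b
    using h U(2) that unfolding lin_on_def by blast
  have h_scale: "h (c *s a) = c *s h a" if "a \<in> U" for a c
    using h U(2) that unfolding lin_on_def by blast
  have "h 0 = 0" using h_add[of 0 0] subspace_0[OF U(1)] by simp
  then show "0 \<in> h ` U" using subspace_0[OF U(1)] by (metis image_eqI)
  show "x + y \<in> h ` U" if xy: "x \<in> h ` U" "y \<in> h ` U" for x y
  proof -
    obtain a b where "a \<in> U" "b \<in> U" "x = h a" "y = h b" using xy by blast
    then show ?thesis using h_add subspace_add[OF U(1)] by (metis image_eqI)
  qed
  show "c *s x \<in> h ` U" if x: "x \<in> h ` U" for c x
  proof -
    obtain a where "a \<in> U" "x = h a" using x by blast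
    then show ?thesis using h_scale subspace_scale[OF U(1)] by (metis image_eqI)
  qed
qed

lemma affine_in_nonempty: "affine_in scale W A \<Longrightarrow> A \<noteq> {}"
  unfolding affine_in_def using subspace_0 by blast

lemma affine_in_subset:
  assumes "subspace W" "affine_in scale W A"
  shows "A \<subseteq> W"
proof -
  obtain z U where "z \<in> W" "U \<subseteq> W" "A = (+) z ` U"
    using assms(2) unfolding affine_in_def by blast
  then show ?thesis using subspace_add[OF assms(1)] by blast
qed

lemma affine_in_self: "subspace W \<Longrightarrow> affine_in scale W W"
  unfolding affine_in_def using subspace_0 by (intro bexI[of _ 0]) auto

lemma differences_translate:
  assumes "subspace U"
  shows "{x - y |x y. x \<in> (+) z ` U \<and> y \<in> (+) z ` U} = U"
proof (intro set_eqI iffI)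
  fix w assume "w \<in> {x - y |x y. x \<in> (+) z ` U \<and> y \<in> (+) z ` U}"
  then show "w \<in> U" using subspace_diff[OF assms] by auto
next
  fix w assume "w \<in> U"
  then have "w = (z + w) - (z + 0) \<and> z + w \<in> (+) z ` U \<and> z + 0 \<in> (+) z ` U"
    using subspace_0[OF assms] by auto
  then show "w \<in> {x - y |x y. x \<in> (+) z ` U \<and> y \<in> (+) z ` U}" by blast
qed

lemma affine_in_image:
  assumes "affine_in scale W A" "lin_on scale scale W h" "h ` W \<subseteq> W'"
  shows "affine_in scale W' (h ` A)"
proof -
  obtain z U where zU: "z \<in> W" "subspace U" "U \<subseteq> W" "A = (+) z ` U"
    using assms(1) unfolding affine_in_def by blast
  have "h (z + u) = h z + h u" if "u \<in> U" for u
    using zU(1,3) that assms(2) unfolding lin_on_def by blast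
  then have "h ` A = (+) (h z) ` h ` U"
    unfolding zU(4) image_image by (intro image_cong) simp_all
  moreover have "subspace (h ` U)" using subspace_image_lin_on[OF zU(2,3) assms(2)] .
  moreover have "h ` U \<subseteq> W'" "h z \<in> W'" using zU assms(3) by auto
  ultimately show ?thesis unfolding affine_in_def by blast
qed

lemma affine_in_fibre:
  assumes W: "subspace W" and A: "affine_in scale W A" and h: "lin_on scale scale W h"
    and ne: "A \<inter> {z. h z = x} \<noteq> {}"
  shows "affine_in scale W (A \<inter> {z. h z = x})"
proof -
  obtain z U where zU: "z \<in> W" "subspace U" "U \<subseteq> W" "A = (+) z ` U"
    using A unfolding affine_in_def by blast
  obtain z' where z': "z' \<in> A" "h z' = x" using ne by blast
  have z'W: "z' \<in> W" using affine_in_subset[OF W A] z'(1) by blast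
  obtain u0 where u0: "u0 \<in> U" "z' = z + u0" using z'(1) zU(4) by blast
  have h_add: "h (a + b) = h a + h b" if "a \<in> W" "b \<in> W" for a b
    using h that unfolding lin_on_def by blast
  have h_scale: "h (c *s a) = c *s h a" if "a \<in> W" for a c
    using h that unfolding lin_on_def by blast
  define U' where "U' = U \<inter> {u. h u = 0}"
  have "subspace U'"
    unfolding U'_def
  proof (rule subspaceI)
    show "0 \<in> U \<inter> {u. h u = 0}" using lin_on_0[OF W h] subspace_0[OF zU(2)] by simp
    show "a + b \<in> U \<inter> {u. h u = 0}" if "a \<in> U \<inter> {u. h u = 0}" "b \<in> U \<inter> {u. h u = 0}" for a b
      using that zU(3) h_add[of a b] subspace_add[OF zU(2)] by auto
    show "c *s a \<in> U \<inter> {u. h u = 0}" if "a \<in> U \<inter> {u. h u = 0}" for c a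
      using that zU(3) h_scale[of a c] subspace_scale[OF zU(2)] by auto
  qed
  moreover have "A \<inter> {z. h z = x} = (+) z' ` U'"
  proof (intro set_eqI iffI)
    fix w assume w: "w \<in> A \<inter> {z. h z = x}"
    then obtain u where u: "u \<in> U" "w = z + u" using zU(4) by blast
    have "w - z' \<in> U" using u u0 subspace_diff[OF zU(2)] by (simp add: algebra_simps)
    moreover have "h (w - z') = 0"
      using lin_on_diff[OF W h _ z'W, of w] w z'(2) affine_in_subset[OF W A] by auto
    ultimately show "w \<in> (+) z' ` U'" unfolding U'_def by (intro image_eqI[of _ _ "w - z'"]) auto
  next
    fix w assume "w \<in> (+) z' ` U'"
    then obtain u where u: "u \<in> U" "h u = 0" "w = z' + u" by (auto simp: U'_def)
    have "w = z + (u0 + u)" using u(3) u0(2) by (simp add: algebra_simps)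
    then have "w \<in> A" using zU(4) subspace_add[OF zU(2) u0(1) u(1)] by blast
    moreover have "h w = x" using h_add[OF z'W, of u] u z'(2) zU(3) by auto
    ultimately show "w \<in> A \<inter> {z. h z = x}" by blast
  qed
  ultimately show ?thesis unfolding affine_in_def using z'W zU(3) U'_def by blast
qed

lemma affine_in_psubset_dim_less:
  assumes F: "finite F" "W \<subseteq> span F"
    and A: "affine_in scale W A" and B: "affine_in scale W B" and "B \<subset> A"
  shows "dim {x - y |x y. x \<in> B \<and> y \<in> B} < dim {x - y |x y. x \<in> A \<and> y \<in> A}"
proof -
  obtain z U where zU: "z \<in> W" "subspace U" "U \<subseteq> W" "A = (+) z ` U"
    using A unfolding affine_in_def by blast
  obtain z' U' where zU': "z' \<in> W" "subspace U'" "U' \<subseteq> W" "B = (+) z' ` U'"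
    using B unfolding affine_in_def by blast
  have "z' \<in> A" using assms(5) zU'(4) subspace_0[OF zU'(2)] by force
  then obtain u0 where u0: "u0 \<in> U" "z' = z + u0" using zU(4) by blast
  have shift: "z' + u \<in> A \<longleftrightarrow> u \<in> U" for u
  proof
    assume "z' + u \<in> A"
    then obtain v where v: "v \<in> U" "z' + u = z + v" using zU(4) by blast
    then have "u = v - u0" using u0(2) by (simp add: algebra_simps)
    then show "u \<in> U" using subspace_diff[OF zU(2) v(1) u0(1)] by simp
  next
    assume "u \<in> U"
    then have "u0 + u \<in> U" using subspace_add[OF zU(2) u0(1)] by blast
    moreover have "z' + u = z + (u0 + u)" using u0(2) by (simp add: add.assoc)
    ultimately show "z' + u \<in> A" using zU(4) by blast
  qed
  have "U' \<subseteq> U" using shift assms(5) zU'(4) by blast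
  moreover have "U' \<noteq> U"
  proof
    assume "U' = U"
    have "A \<subseteq> B"
    proof
      fix w assume "w \<in> A"
      then have "w - z' \<in> U'" using shift[of "w - z'"] \<open>U' = U\<close> by simp
      then show "w \<in> B" using zU'(4) by (auto intro: image_eqI[of _ _ "w - z'"])
    qed
    then show False using assms(5) by blast
  qed
  ultimately have "dim U' < dim U"
    using dim_less_of_psubset[OF F(1) zU'(2) zU(2)] zU(3) F(2) by blast
  then show ?thesis
    unfolding zU(4) zU'(4) differences_translate[OF zU(2)] differences_translate[OF zU'(2)] .
qed

theorem affine_inverse_limit:
  assumes "inverse_system I le P g"
    and W_sub: "\<And>i. i \<in> I \<Longrightarrow> subspace (W i)"
    and W_fin: "\<And>i. i \<in> I \<Longrightarrow> \<exists>F. finite F \<and> W i \<subseteq> span F"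
    and g_W: "\<And>i j. i \<in> I \<Longrightarrow> j \<in> I \<Longrightarrow> le i j \<Longrightarrow> g i j ` W j \<subseteq> W i"
    and g_lin: "\<And>i j. i \<in> I \<Longrightarrow> j \<in> I \<Longrightarrow> le i j \<Longrightarrow> lin_on scale scale (W j) (g i j)"
    and P_affine: "\<And>i. i \<in> I \<Longrightarrow> affine_in scale (W i) (P i)"
  shows "\<exists>s. inverse_system.compatible_family I le P g s"
proof -
  interpret inverse_system I le P g by fact
  interpret artinian_inverse_system I le P g "\<lambda>i. {A. A \<subseteq> P i \<and> affine_in scale (W i) A}"
    "\<lambda>i A. dim {x - y |x y. x \<in> A \<and> y \<in> A}"
  proof unfold_locales
    fix i j A assume ij: "i \<in> I" "j \<in> I" "le i j" and A: "A \<in> {A. A \<subseteq> P j \<and> affine_in scale (W j) A}"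
    show "g i j ` A \<in> {A. A \<subseteq> P i \<and> affine_in scale (W i) A}"
      using A g_maps[OF ij] affine_in_image[OF _ g_lin[OF ij] g_W[OF ij]] by auto
    fix x assume "A \<inter> {z. g i j z = x} \<noteq> {}"
    then show "A \<inter> {z. g i j z = x} \<in> {A. A \<subseteq> P j \<and> affine_in scale (W j) A}"
      using A affine_in_fibre[OF W_sub[OF ij(2)] _ g_lin[OF ij]] by auto
  next
    fix i A B assume i: "i \<in> I" and "A \<in> {A. A \<subseteq> P i \<and> affine_in scale (W i) A}"
      and "B \<in> {A. A \<subseteq> P i \<and> affine_in scale (W i) A}" "B \<subset> A"
    then show "dim {x - y |x y. x \<in> B \<and> y \<in> B} < dim {x - y |x y. x \<in> A \<and> y \<in> A}"
      using W_fin[OF i] affine_in_psubset_dim_less by blast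
  qed (use P_affine affine_in_nonempty in auto)
  show ?thesis using compatible_family_exists .
qed

end

section \<open>Exact squares and blocks\<close>

lemma pleq_refl [simp]: "pleq p p"
  by (simp add: pleq_def)

lemma pleq_trans: "pleq p q \<Longrightarrow> pleq q r \<Longrightarrow> pleq p r"
  by (auto simp: pleq_def)

lemma pleq_Pair [simp]: "pleq (a, b) (c, d) \<longleftrightarrow> a \<le> c \<and> b \<le> d"
  by (simp add: pleq_def)

lemma pleq_swap [simp]: "pleq (prod.swap p) (prod.swap q) \<longleftrightarrow> pleq p q"
  by (auto simp: pleq_def)

lemma ker_rightI: "fst p \<le> c \<Longrightarrow> x \<in> V p \<Longrightarrow> f p (c, snd p) x = 0 \<Longrightarrow> x \<in> ker_right V f p"
  unfolding ker_right_def by blast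

lemma ker_rightE:
  assumes "x \<in> ker_right V f p"
  obtains c where "fst p \<le> c" "x \<in> V p" "f p (c, snd p) x = 0"
  using assms unfolding ker_right_def by blast

lemma square_exact_injective:
  assumes "square_exact V f x x' y y'" "v \<in> V (x, y)"
    and "f (x, y) (x, y') v = 0" "f (x, y) (x', y) v = 0"
  shows "v = 0"
  using assms unfolding square_exact_def Let_def by blast

lemma square_exact_kernel_iff:
  assumes "square_exact V f x x' y y'" "a \<in> V (x, y')" "b \<in> V (x', y)"
  shows "f (x, y') (x', y') a = f (x', y) (x', y') b
    \<longleftrightarrow> (\<exists>v\<in>V (x, y). a = f (x, y) (x, y') v \<and> b = f (x, y) (x', y) v)"
  using assms unfolding square_exact_def Let_def by simp

lemma square_exact_surjective:
  assumes "square_exact V f x x' y y'" "w \<in> V (x', y')"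
  shows "\<exists>a\<in>V (x, y'). \<exists>b\<in>V (x', y). w = f (x, y') (x', y') a - f (x', y) (x', y') b"
  using assms unfolding square_exact_def Let_def by (elim conjE) (rule bspec)

text \<open>Transposing swaps the two middle summands and thus the sign of the difference map; only
surjectivity is affected, so it is assumed in transposed form.\<close>

lemma square_exact_transpose:
  assumes sq: "square_exact V f x x' y y'"
    and surj: "\<And>w. w \<in> V (x', y') \<Longrightarrow>
      \<exists>a\<in>V (x', y). \<exists>b\<in>V (x, y'). w = f (x', y) (x', y') a - f (x, y') (x', y') b"
  shows "square_exact (\<lambda>q. V (prod.swap q)) (\<lambda>p q. f (prod.swap p) (prod.swap q)) y y' x x'"
  unfolding square_exact_def Let_def prod.swap_def fst_conv snd_conv
proof (intro conjI ballI impI)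
  show "v = 0" if "v \<in> V (x, y)" "f (x, y) (x', y) v = 0 \<and> f (x, y) (x, y') v = 0" for v
    using square_exact_injective[OF sq that(1)] that(2) by simp
  show "f (x', y) (x', y') a - f (x, y') (x', y') b = 0
      \<longleftrightarrow> (\<exists>v\<in>V (x, y). a = f (x, y) (x', y) v \<and> b = f (x, y) (x, y') v)"
    if ab: "a \<in> V (x', y)" "b \<in> V (x, y')" for a b
  proof -
    have "f (x', y) (x', y') a - f (x, y') (x', y') b = 0
        \<longleftrightarrow> f (x, y') (x', y') b = f (x', y) (x', y') a" by auto
    also have "\<dots> \<longleftrightarrow> (\<exists>v\<in>V (x, y). b = f (x, y) (x, y') v \<and> a = f (x, y) (x', y) v)"
      by (rule square_exact_kernel_iff[OF sq ab(2,1)])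
    finally show ?thesis by blast
  qed
qed (fact surj)

lemma db_block_nonempty: "db_block B \<Longrightarrow> \<exists>p. p \<in> B"
  unfolding db_block_def down_closed_def by blast

lemma db_block_join:
  assumes "db_block B" "q \<in> B" "r \<in> B"
  shows "(max (fst q) (fst r), max (snd q) (snd r)) \<in> B"
proof -
  obtain JS JT where "B = JS \<times> JT" using assms(1) unfolding db_block_def by blast
  then show ?thesis using assms(2,3) by (auto simp: max_def)
qed

lemma db_block_cylinder: "down_closed J \<Longrightarrow> db_block (J \<times> UNIV)"
  unfolding db_block_def by (intro exI[of _ J] exI[of _ UNIV]) (simp add: down_closed_def)

lemma db_block_swap:
  assumes "db_block B"
  shows "db_block (prod.swap -` B)"
proof -
  obtain JS JT where "down_closed JS" "down_closed JT" "B = JS \<times> JT"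
    using assms unfolding db_block_def by blast
  moreover have "prod.swap -` (JS \<times> JT) = JT \<times> JS" by auto
  ultimately show ?thesis unfolding db_block_def by (intro exI[of _ JT] exI[of _ JS]) simp
qed

section \<open>Persistence modules over \<open>S \<times> T\<close>\<close>

locale persistence_module =
  fixes sc :: "'k::field \<Rightarrow> 'v::ab_group_add \<Rightarrow> 'v"
    and V :: "'s::linorder \<times> 't::linorder \<Rightarrow> 'v set"
    and f :: "'s \<times> 't \<Rightarrow> 's \<times> 't \<Rightarrow> 'v \<Rightarrow> 'v"
  assumes pmod: "pmod sc V f"
begin

sublocale vector_space sc
  using pmod by (simp add: pmod_def)

lemma V_subspace: "subspace (V p)"
  using pmod unfolding pmod_def by blast

lemma V_0 [simp]: "0 \<in> V p"
  using subspace_0[OF V_subspace] .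

lemma f_maps: "pleq p q \<Longrightarrow> x \<in> V p \<Longrightarrow> f p q x \<in> V q"
  using pmod unfolding pmod_def by blast

lemma f_lin: "pleq p q \<Longrightarrow> lin_on sc sc (V p) (f p q)"
  using pmod unfolding pmod_def by blast

lemma f_add: "pleq p q \<Longrightarrow> x \<in> V p \<Longrightarrow> y \<in> V p \<Longrightarrow> f p q (x + y) = f p q x + f p q y"
  using f_lin unfolding lin_on_def by blast

lemma f_scale: "pleq p q \<Longrightarrow> x \<in> V p \<Longrightarrow> f p q (sc c x) = sc c (f p q x)"
  using f_lin unfolding lin_on_def by blast

lemma f_id: "x \<in> V p \<Longrightarrow> f p p x = x"
  using pmod unfolding pmod_def by blast

lemma f_comp: "pleq p q \<Longrightarrow> pleq q r \<Longrightarrow> x \<in> V p \<Longrightarrow> f q r (f p q x) = f p r x"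
  using pmod unfolding pmod_def by blast

lemma f_0 [simp]: "pleq p q \<Longrightarrow> f p q 0 = 0"
  using lin_on_0[OF V_subspace f_lin] .

lemma f_diff: "pleq p q \<Longrightarrow> x \<in> V p \<Longrightarrow> y \<in> V p \<Longrightarrow> f p q (x - y) = f p q x - f p q y"
  using lin_on_diff[OF V_subspace f_lin] .

lemma f_ker_right:
  assumes "pleq p q" "x \<in> ker_right V f p"
  shows "f p q x \<in> ker_right V f q"
proof -
  obtain c where c: "fst p \<le> c" "x \<in> V p" "f p (c, snd p) x = 0"
    using assms(2) by (rule ker_rightE)
  define c' where "c' = max c (fst q)"
  have le: "pleq p (c, snd p)" "pleq (c, snd p) (c', snd q)" "pleq q (c', snd q)"
    using c(1) assms(1) by (auto simp: pleq_def c'_def)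
  have "f q (c', snd q) (f p q x) = f p (c', snd q) x"
    using f_comp[OF assms(1) le(3) c(2)] .
  also have "\<dots> = f (c, snd p) (c', snd q) (f p (c, snd p) x)"
    using f_comp[OF le(1,2) c(2)] by simp
  finally have "f q (c', snd q) (f p q x) = 0" using c(3) le(2) by simp
  moreover have "fst q \<le> c'" by (simp add: c'_def)
  ultimately show ?thesis
    using f_maps[OF assms(1) c(2)] by (simp add: ker_rightI)
qed

definition global_section :: "('s \<times> 't \<Rightarrow> 'v) \<Rightarrow> bool" where
  "global_section e \<longleftrightarrow> (\<forall>q. e q \<in> V q) \<and> (\<forall>p q. pleq p q \<longrightarrow> f p q (e p) = e q)"

lemma global_section_V: "global_section e \<Longrightarrow> e q \<in> V q"
  unfolding global_section_def by blast

lemma global_section_f: "global_section e \<Longrightarrow> pleq p q \<Longrightarrow> f p q (e p) = e q"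
  unfolding global_section_def by blast

lemma section_nonzero_below:
  assumes "global_section e" "pleq p q" "e q \<noteq> 0"
  shows "e p \<noteq> 0"
  using assms f_0 unfolding global_section_def by metis

text \<open>Transport from the meet with \<open>p\<close>.\<close>

lemma global_section_extend:
  assumes s_V: "\<And>q. pleq q p \<Longrightarrow> s q \<in> V q"
    and s_comp: "\<And>q r. pleq q r \<Longrightarrow> pleq r p \<Longrightarrow> f q r (s q) = s r"
  shows "\<exists>e. global_section e \<and> (\<forall>q. pleq q p \<longrightarrow> e q = s q)"
proof -
  define m where "m r = (min (fst r) (fst p), min (snd r) (snd p))" for r
  have m_le: "pleq (m r) r" "pleq (m r) p" for r
    by (auto simp: m_def pleq_def)
  have m_mono: "pleq (m r) (m r')" if "pleq r r'" for r r'
    using that by (auto simp: m_def pleq_def min.coboundedI1 min.coboundedI2)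
  define e where "e r = f (m r) r (s (m r))" for r
  have "global_section e"
    unfolding global_section_def
  proof (intro conjI allI impI)
    show "e r \<in> V r" for r :: "'s \<times> 't" unfolding e_def using f_maps[OF m_le(1) s_V[OF m_le(2)]] .
    fix r r' :: "'s \<times> 't" assume rr: "pleq r r'"
    have "e r' = f (m r') r' (f (m r) (m r') (s (m r)))"
      unfolding e_def using s_comp[OF m_mono[OF rr] m_le(2)] by simp
    also have "\<dots> = f (m r) r' (s (m r))" using f_comp[OF m_mono[OF rr] m_le(1) s_V[OF m_le(2)]] .
    also have "\<dots> = f r r' (e r)" unfolding e_def using f_comp[OF m_le(1) rr s_V[OF m_le(2)]] by simp
    finally show "f r r' (e r) = e r'" by simp
  qed
  moreover have "e q = s q" if "pleq q p" for q
  proof -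
    have "m q = q" using that by (cases q) (simp add: m_def pleq_def)
    then show ?thesis using f_id[OF s_V[OF that]] by (simp add: e_def)
  qed
  ultimately show ?thesis by blast
qed

text \<open>Lift \<open>v\<close> along the row of \<open>p\<close> by the image condition, then down to \<open>q\<close> by exactness of
the square spanned by \<open>q\<close> and \<open>(c, snd p)\<close>.\<close>

lemma lift_below_left:
  assumes exact: "\<And>x x' y y'. x \<le> x' \<Longrightarrow> y \<le> y' \<Longrightarrow> square_exact V f x x' y y'"
    and v: "v \<in> im_left V f p" and c: "fst p \<le> c" "f p (c, snd p) v = 0"
    and q: "pleq q p"
  shows "\<exists>u\<in>V q. f q p u = v \<and> f q (c, snd q) u = 0"
proof -
  obtain a b where p: "p = (a, b)" by (cases p)
  obtain x y where q': "q = (x, y)" by (cases q)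
  have xy: "x \<le> a" "y \<le> b" using q unfolding p q' by simp_all
  obtain w where w: "w \<in> V (x, b)" "f (x, b) p w = v"
    using v xy(1) unfolding im_left_def p by auto
  have "f (x, b) (c, b) w = f p (c, b) (f (x, b) p w)"
    using f_comp[of "(x, b)" p "(c, b)" w] w(1) xy c(1) unfolding p by simp
  then have "f (x, b) (c, b) w = f (c, y) (c, b) 0" using w(2) c(2) xy(2) unfolding p by simp
  moreover have "x \<le> c" using xy(1) c(1) unfolding p by simp
  ultimately obtain u where u: "u \<in> V (x, y)" "w = f (x, y) (x, b) u" "0 = f (x, y) (c, y) u"
    using square_exact_kernel_iff[OF exact[OF _ xy(2)] w(1) V_0] by blast
  have "f (x, y) p u = v"
    using f_comp[of "(x, y)" "(x, b)" p u] u(1,2) w(2) xy unfolding p by simp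
  then show ?thesis using u unfolding q' by auto
qed

lemma affine_in_double_fibre:
  assumes "pleq q p" "pleq q r" "u \<in> V q"
  shows "affine_in sc (V q) {w \<in> V q. f q p w = f q p u \<and> f q r w = f q r u}"
proof -
  have "affine_in sc (V q) (V q \<inter> {w. f q p w = f q p u})"
    using affine_in_fibre[OF V_subspace affine_in_self[OF V_subspace] f_lin[OF assms(1)]] assms(3)
    by blast
  then have "affine_in sc (V q) ((V q \<inter> {w. f q p w = f q p u}) \<inter> {w. f q r w = f q r u})"
    using affine_in_fibre[OF V_subspace _ f_lin[OF assms(2)]] assms(3) by blast
  moreover have "(V q \<inter> {w. f q p w = f q p u}) \<inter> {w. f q r w = f q r u}
      = {w \<in> V q. f q p w = f q p u \<and> f q r w = f q r u}" by auto
  ultimately show ?thesis by simp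
qed

lemma lifts_inverse_system:
  assumes "fst p \<le> c"
  shows "inverse_system {q. pleq q p} (\<lambda>i j. pleq j i)
    (\<lambda>q. {u \<in> V q. f q p u = v \<and> f q (c, snd q) u = 0}) (\<lambda>i j. f j i)"
proof
  fix i j assume "i \<in> {q. pleq q p}" "j \<in> {q. pleq q p}"
  then show "\<exists>k\<in>{q. pleq q p}. pleq k i \<and> pleq k j"
    by (intro bexI[of _ "(min (fst i) (fst j), min (snd i) (snd j))"])
      (auto simp: pleq_def min.coboundedI1)
next
  fix i j x assume ij: "i \<in> {q. pleq q p}" "j \<in> {q. pleq q p}" "pleq i j"
    and x: "x \<in> {u \<in> V i. f i p u = v \<and> f i (c, snd i) u = 0}"
  have c_le: "pleq i (c, snd i)" "pleq j (c, snd j)" "pleq (c, snd i) (c, snd j)"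
    using ij assms by (auto simp: pleq_def)
  have xV: "x \<in> V i" using x by simp
  have "f j p (f i j x) = v" using f_comp[OF ij(3)] ij x by auto
  moreover have "f j (c, snd j) (f i j x) = f (c, snd i) (c, snd j) (f i (c, snd i) x)"
    using f_comp[OF ij(3) c_le(2) xV] f_comp[OF c_le(1,3) xV] by simp
  ultimately show "f i j x \<in> {u \<in> V j. f j p u = v \<and> f j (c, snd j) u = 0}"
    using f_maps[OF ij(3) xV] x c_le(3) by simp
qed (use f_id f_comp pleq_trans in auto)

text \<open>The lifts of \<open>v\<close> to the points below \<open>p\<close> that die at the column \<open>c\<close> form an inverse
system of non-empty affine subspaces of finite-dimensional spaces, hence admit a compatible
choice.\<close>

lemma compatible_lifts_exist:
  assumes pfd: "pfd sc V"
    and exact: "\<And>x x' y y'. x \<le> x' \<Longrightarrow> y \<le> y' \<Longrightarrow> square_exact V f x x' y y'"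
    and v: "v \<in> im_left V f p" and c: "fst p \<le> c" "f p (c, snd p) v = 0"
  obtains s where "\<And>q. pleq q p \<Longrightarrow> s q \<in> V q \<and> f q p (s q) = v \<and> f q (c, snd q) (s q) = 0"
    and "\<And>q r. pleq q r \<Longrightarrow> pleq r p \<Longrightarrow> f q r (s q) = s r"
proof -
  define I where "I = {q. pleq q p}"
  define P where "P q = {u \<in> V q. f q p u = v \<and> f q (c, snd q) u = 0}" for q
  have sys: "inverse_system I (\<lambda>i j. pleq j i) P (\<lambda>i j. f j i)"
    unfolding I_def P_def[abs_def] using lifts_inverse_system[OF c(1)] .
  have "affine_in sc (V q) (P q)" if q: "q \<in> I" for q
  proof -
    have qp: "pleq q p" using q by (simp add: I_def)
    then obtain u where u: "u \<in> V q" "f q p u = v" "f q (c, snd q) u = 0"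
      using lift_below_left[OF exact v c] by blast
    have "pleq q (c, snd q)" using qp c(1) by (auto simp: pleq_def)
    from affine_in_double_fibre[OF qp this u(1)] show ?thesis using u by (simp add: P_def)
  qed
  moreover have "\<exists>F. finite F \<and> V q \<subseteq> span F" for q
    using pfd unfolding pfd_def by (metis order_refl)
  moreover have "f j i ` V j \<subseteq> V i" "lin_on sc sc (V j) (f j i)" if "pleq j i" for i j
    using f_maps[OF that] f_lin[OF that] by auto
  ultimately obtain s where "inverse_system.compatible_family I (\<lambda>i j. pleq j i) P (\<lambda>i j. f j i) s"
    using affine_inverse_limit[where W = V, OF sys V_subspace] by blast
  then have s: "\<forall>i\<in>{q. pleq q p}. s i \<in> P i \<and> (\<forall>j\<in>{q. pleq q p}. pleq j i \<longrightarrow> f j i (s j) = s i)"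
    unfolding I_def[symmetric] by (simp add: inverse_system.compatible_family_def[OF sys])
  show ?thesis
  proof
    show "s q \<in> V q \<and> f q p (s q) = v \<and> f q (c, snd q) (s q) = 0" if "pleq q p" for q
      using s that unfolding P_def by blast
    show "f q r (s q) = s r" if "pleq q r" "pleq r p" for q r
      using s that pleq_trans[OF that] by blast
  qed
qed

lemma section_through_left:
  assumes pfd: "pfd sc V"
    and exact: "\<And>x x' y y'. x \<le> x' \<Longrightarrow> y \<le> y' \<Longrightarrow> square_exact V f x x' y y'"
    and v: "v \<in> im_left V f p" "v \<in> ker_right V f p"
  shows "\<exists>e. global_section e \<and> e p = v \<and> (\<forall>r. e r \<in> ker_right V f r)"
proof -
  obtain c where c: "fst p \<le> c" "f p (c, snd p) v = 0"
    using v(2) by (rule ker_rightE)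
  obtain s where s: "\<And>q. pleq q p \<Longrightarrow> s q \<in> V q \<and> f q p (s q) = v \<and> f q (c, snd q) (s q) = 0"
    and s_comp: "\<And>q r. pleq q r \<Longrightarrow> pleq r p \<Longrightarrow> f q r (s q) = s r"
    using compatible_lifts_exist[OF pfd exact v(1) c] by blast
  obtain e where e: "global_section e" "\<And>q. pleq q p \<Longrightarrow> e q = s q"
    using global_section_extend[of p s] s s_comp by blast
  have "e p = v" using e(2)[of p] s[of p] f_id[of "s p" p] by auto
  moreover have "e r \<in> ker_right V f r" for r
  proof -
    define m where "m = (min (fst r) (fst p), min (snd r) (snd p))"
    have m: "pleq m r" "pleq m p" by (auto simp: m_def pleq_def)
    have "fst m \<le> c" using m(2) c(1) by (auto simp: pleq_def)
    then have "e m \<in> ker_right V f m" using e(2)[OF m(2)] s[OF m(2)] by (simp add: ker_rightI)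
    then have "f m r (e m) \<in> ker_right V f r" by (rule f_ker_right[OF m(1)])
    then show ?thesis using global_section_f[OF e(1) m(1)] by simp
  qed
  ultimately show ?thesis using e(1) by blast
qed

lemma section_support_vertical:
  assumes exact: "\<And>x x' y y'. x \<le> x' \<Longrightarrow> y \<le> y' \<Longrightarrow> square_exact V f x x' y y'"
    and e: "global_section e" "\<And>r. e r \<in> ker_right V f r" and ne: "e (x, y) \<noteq> 0"
  shows "e (x, y') \<noteq> 0"
proof (cases "y' \<le> y")
  case True
  then show ?thesis using section_nonzero_below[OF e(1) _ ne] by simp
next
  case False
  then have yy: "y \<le> y'" by simp
  obtain c where c: "x \<le> c" "f (x, y) (c, y) (e (x, y)) = 0"
    using e(2)[of "(x, y)"] by (auto elim: ker_rightE)
  show ?thesis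
  proof
    assume "e (x, y') = 0"
    then have "f (x, y) (x, y') (e (x, y)) = 0" using global_section_f[OF e(1)] yy by simp
    then show False
      using square_exact_injective[OF exact[OF c(1) yy] global_section_V[OF e(1)] _ c(2)] ne by simp
  qed
qed

lemma section_support_cylinder:
  assumes exact: "\<And>x x' y y'. x \<le> x' \<Longrightarrow> y \<le> y' \<Longrightarrow> square_exact V f x x' y y'"
    and e: "global_section e" "\<And>r. e r \<in> ker_right V f r" and ne: "e p \<noteq> 0"
  shows "db_block {q. e q \<noteq> 0}"
proof -
  define J where "J = {x. e (x, snd p) \<noteq> 0}"
  have "down_closed J"
    unfolding down_closed_def J_def
    using ne section_nonzero_below[OF e(1)] by (cases p) force
  moreover have "{q. e q \<noteq> 0} = J \<times> UNIV"
    unfolding J_def using section_support_vertical[OF exact e] by fastforce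
  ultimately show ?thesis by (simp add: db_block_cylinder)
qed

lemma exists_db_section_left:
  assumes pfd: "pfd sc V"
    and exact: "\<And>x x' y y'. x \<le> x' \<Longrightarrow> y \<le> y' \<Longrightarrow> square_exact V f x x' y y'"
    and v: "v \<in> im_left V f p" "v \<in> ker_right V f p" "v \<noteq> 0"
  shows "\<exists>e. global_section e \<and> db_block {q. e q \<noteq> 0}"
proof -
  obtain e where "global_section e" "e p = v" "\<And>r. e r \<in> ker_right V f r"
    using section_through_left[OF pfd exact v(1,2)] by blast
  then show ?thesis using section_support_cylinder[OF exact] v(3) by blast
qed

definition transposed_space :: "'t \<times> 's \<Rightarrow> 'v set" where
  "transposed_space q = V (prod.swap q)"

definition transposed_map :: "'t \<times> 's \<Rightarrow> 't \<times> 's \<Rightarrow> 'v \<Rightarrow> 'v" where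
  "transposed_map p q = f (prod.swap p) (prod.swap q)"

lemma persistence_module_transposed: "persistence_module sc transposed_space transposed_map"
proof
  have maps: "transposed_map p q ` transposed_space p \<subseteq> transposed_space q"
    and lin: "lin_on sc sc (transposed_space p) (transposed_map p q)" if "pleq p q" for p q
    using f_maps[of "prod.swap p" "prod.swap q"] f_lin[of "prod.swap p" "prod.swap q"] that
    unfolding transposed_space_def transposed_map_def by auto
  have comp: "transposed_map q r (transposed_map p q x) = transposed_map p r x"
    if "pleq p q" "pleq q r" "x \<in> transposed_space p" for p q r x
    using f_comp[of "prod.swap p" "prod.swap q" "prod.swap r" x] that
    unfolding transposed_space_def transposed_map_def by simp
  have "transposed_map p p x = x" if "x \<in> transposed_space p" for p x
    using f_id that unfolding transposed_space_def transposed_map_def by simp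
  then show "pmod sc transposed_space transposed_map"
    unfolding pmod_def using vector_space_axioms V_subspace maps lin comp
    by (simp add: transposed_space_def)
qed

lemma pfd_transposed: "pfd sc V \<Longrightarrow> pfd sc transposed_space"
  unfolding pfd_def transposed_space_def by (rule allI) (erule allE)

lemma f_neg: "pleq p q \<Longrightarrow> x \<in> V p \<Longrightarrow> f p q (- x) = - f p q x"
  using f_diff[of p q 0 x] by simp

lemma square_exact_transposed:
  assumes sq: "square_exact V f x x' y y'" and le: "x \<le> x'" "y \<le> y'"
  shows "square_exact transposed_space transposed_map y y' x x'"
  unfolding transposed_space_def[abs_def] transposed_map_def[abs_def]
proof (rule square_exact_transpose[OF sq])
  fix w assume "w \<in> V (x', y')"
  then obtain a b where ab: "a \<in> V (x, y')" "b \<in> V (x', y)"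
    "w = f (x, y') (x', y') a - f (x', y) (x', y') b"
    using square_exact_surjective[OF sq] by blast
  then have "w = f (x', y) (x', y') (- b) - f (x, y') (x', y') (- a)"
    using f_neg le by simp
  then show "\<exists>a\<in>V (x', y). \<exists>b\<in>V (x, y'). w = f (x', y) (x', y') a - f (x, y') (x', y') b"
    using ab subspace_neg[OF V_subspace] by blast
qed

lemma im_left_transposed: "im_left transposed_space transposed_map (prod.swap p) = im_down V f p"
  unfolding im_left_def im_down_def transposed_space_def transposed_map_def by simp

lemma ker_right_transposed: "ker_right transposed_space transposed_map (prod.swap p) = ker_up V f p"
  unfolding ker_right_def ker_up_def transposed_space_def transposed_map_def by simp

lemma exists_db_section_down:
  assumes pfd: "pfd sc V"
    and exact: "\<And>x x' y y'. x \<le> x' \<Longrightarrow> y \<le> y' \<Longrightarrow> square_exact V f x x' y y'"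
    and v: "v \<in> im_down V f p" "v \<in> ker_up V f p" "v \<noteq> 0"
  shows "\<exists>e. global_section e \<and> db_block {q. e q \<noteq> 0}"
proof -
  interpret T: persistence_module sc transposed_space transposed_map by (rule persistence_module_transposed)
  obtain e where e: "T.global_section e" "db_block {q. e q \<noteq> 0}"
    using T.exists_db_section_left[OF pfd_transposed[OF pfd] square_exact_transposed[OF exact]]
      v im_left_transposed ker_right_transposed by blast
  have "global_section (e \<circ> prod.swap)"
    using e(1) unfolding global_section_def T.global_section_def transposed_space_def
      transposed_map_def by (metis comp_apply pleq_swap swap_swap)
  moreover have "{q. (e \<circ> prod.swap) q \<noteq> 0} = prod.swap -` {q. e q \<noteq> 0}" by auto
  ultimately show ?thesis using db_block_swap[OF e(2)] by metis
qed

subsection \<open>The line spanned by a section as a direct summand\<close>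

definition section_line :: "('s \<times> 't \<Rightarrow> 'v) \<Rightarrow> 's \<times> 't \<Rightarrow> 'v set" where
  "section_line e q = range (\<lambda>c. sc c (e q))"

lemma section_line_subspace: "subspace (section_line e q)"
proof (rule subspaceI)
  show "0 \<in> section_line e q" unfolding section_line_def by (metis rangeI scale_zero_left)
  show "x + y \<in> section_line e q" if "x \<in> section_line e q" "y \<in> section_line e q" for x y
    using that unfolding section_line_def by (auto simp: scale_left_distrib[symmetric])
  show "sc c x \<in> section_line e q" if "x \<in> section_line e q" for c x
    using that unfolding section_line_def by auto
qed

lemma section_line_subset_V: "global_section e \<Longrightarrow> section_line e q \<subseteq> V q"
  unfolding section_line_def using subspace_scale[OF V_subspace global_section_V] by blast

lemma section_line_submod:
  assumes "global_section e"
  shows "submod sc V f (section_line e)"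
  unfolding submod_def
proof (intro conjI allI impI)
  fix p :: "'s \<times> 't"
  show "section_line e p \<subseteq> V p" by (rule section_line_subset_V[OF assms])
  show "subspace (section_line e p)" by (rule section_line_subspace)
  fix q assume pq: "pleq p q"
  show "f p q ` section_line e p \<subseteq> section_line e q"
    unfolding section_line_def
    using f_scale[OF pq global_section_V[OF assms]] global_section_f[OF assms pq] by auto
qed

definition line_complement :: "('s \<times> 't \<Rightarrow> 'v) \<Rightarrow> ('s \<times> 't \<Rightarrow> 'v set) \<Rightarrow> bool" where
  "line_complement e N \<longleftrightarrow> submod sc V f N \<and> (\<forall>q. N q \<inter> section_line e q = {0})"

lemma line_complement_subspace: "line_complement e N \<Longrightarrow> subspace (N q)"
  unfolding line_complement_def submod_def by blast

lemma line_complement_V: "line_complement e N \<Longrightarrow> N q \<subseteq> V q"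
  unfolding line_complement_def submod_def by blast

lemma line_complement_f: "line_complement e N \<Longrightarrow> pleq p q \<Longrightarrow> x \<in> N p \<Longrightarrow> f p q x \<in> N q"
  unfolding line_complement_def submod_def by blast

lemma line_complement_disjoint: "line_complement e N \<Longrightarrow> x \<in> N q \<Longrightarrow> x = sc c (e q) \<Longrightarrow> x = 0"
  unfolding line_complement_def section_line_def by blast

lemma line_complement_zero: "line_complement e (\<lambda>q. {0})"
  unfolding line_complement_def submod_def using subspace_0[OF section_line_subspace] by auto

lemma line_complement_chain_Union:
  assumes "C \<noteq> {}" and C: "\<And>N. N \<in> C \<Longrightarrow> line_complement e N"
    and chain: "\<And>N N'. N \<in> C \<Longrightarrow> N' \<in> C \<Longrightarrow> N \<le> N' \<or> N' \<le> N"
  shows "line_complement e (\<lambda>q. \<Union>N\<in>C. N q)"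
proof -
  define U where "U q = (\<Union>N\<in>C. N q)" for q
  obtain N0 where N0: "N0 \<in> C" using assms(1) by blast
  have U_0: "0 \<in> U q" for q
    using N0 subspace_0[OF line_complement_subspace[OF C]] unfolding U_def by blast
  have common: "\<exists>N\<in>C. x \<in> N q \<and> y \<in> N q" if xy: "x \<in> U q" "y \<in> U q" for x y q
  proof -
    obtain N N' where N: "N \<in> C" "x \<in> N q" "N' \<in> C" "y \<in> N' q" using xy by (auto simp: U_def)
    moreover have "N q \<subseteq> N' q \<or> N' q \<subseteq> N q" using chain[OF N(1,3)] by (metis le_funD)
    ultimately show ?thesis by blast
  qed
  have "subspace (U q)" for q
  proof (rule subspaceI)
    show "x + y \<in> U q" if xy: "x \<in> U q" "y \<in> U q" for x y
    proof -
      obtain N where "N \<in> C" "x \<in> N q" "y \<in> N q" using common[OF xy] by blast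
      then show ?thesis using subspace_add[OF line_complement_subspace[OF C]] unfolding U_def by blast
    qed
    show "sc c x \<in> U q" if "x \<in> U q" for c x
      using that subspace_scale[OF line_complement_subspace[OF C]] unfolding U_def by blast
  qed (fact U_0)
  moreover have "U q \<subseteq> V q" for q
    using line_complement_V[OF C] unfolding U_def by blast
  moreover have "f p q ` U p \<subseteq> U q" if pq: "pleq p q" for p q
  proof
    fix y assume "y \<in> f p q ` U p"
    then obtain N x where "N \<in> C" "x \<in> N p" "y = f p q x" unfolding U_def by blast
    then show "y \<in> U q" using line_complement_f[OF C pq] unfolding U_def by blast
  qed
  moreover have "U q \<inter> section_line e q = {0}" for q
  proof -
    have "U q \<inter> section_line e q \<subseteq> {0}" using C unfolding U_def line_complement_def by blast
    then show ?thesis using U_0 subspace_0[OF section_line_subspace] by blast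
  qed
  ultimately have "line_complement e U" unfolding line_complement_def submod_def by blast
  then show ?thesis by (simp add: U_def[abs_def])
qed

lemma maximal_line_complement_exists:
  obtains N where "line_complement e N" "\<And>N'. line_complement e N' \<Longrightarrow> N \<le> N' \<Longrightarrow> N' = N"
proof -
  have "\<exists>N\<in>Collect (line_complement e). \<forall>N'\<in>Collect (line_complement e). N \<le> N' \<longrightarrow> N' = N"
  proof (rule Zorn_order_max)
    fix C assume C: "C \<subseteq> Collect (line_complement e)"
      and chain: "\<And>N N'. N \<in> C \<Longrightarrow> N' \<in> C \<Longrightarrow> N \<le> N' \<or> N' \<le> N"
    show "\<exists>U\<in>Collect (line_complement e). \<forall>N\<in>C. N \<le> U"
    proof (cases "C = {}")
      case False
      have "line_complement e (\<lambda>q. \<Union>N\<in>C. N q)"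
        using line_complement_chain_Union[OF False _ chain] C by blast
      moreover have "\<forall>N\<in>C. N \<le> (\<lambda>q. \<Union>N\<in>C. N q)" by (auto simp: le_fun_def)
      ultimately show ?thesis by blast
    qed (use line_complement_zero in blast)
  qed
  then show ?thesis using that by blast
qed

definition adjoin :: "('s \<times> 't \<Rightarrow> 'v set) \<Rightarrow> 's \<times> 't \<Rightarrow> 'v \<Rightarrow> 's \<times> 't \<Rightarrow> 'v set" where
  "adjoin N q u r = (if pleq q r then {n + sc s (f q r u) |n s. n \<in> N r} else N r)"

lemma adjoin_memI: "pleq q r \<Longrightarrow> n \<in> N r \<Longrightarrow> n + sc s (f q r u) \<in> adjoin N q u r"
  unfolding adjoin_def by auto

lemma adjoin_memE:
  assumes "pleq q r" "x \<in> adjoin N q u r"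
  obtains n s where "n \<in> N r" "x = n + sc s (f q r u)"
  using assms unfolding adjoin_def by auto

lemma subset_adjoin: "N r \<subseteq> adjoin N q u r"
proof
  fix x assume x: "x \<in> N r"
  show "x \<in> adjoin N q u r"
  proof (cases "pleq q r")
    case True
    then show ?thesis using adjoin_memI[where N = N and n = x and s = 0 and u = u, OF True x] by simp
  qed (simp add: adjoin_def x)
qed

lemma subspace_adjoin:
  assumes N: "subspace (N r)"
  shows "subspace (adjoin N q u r)"
proof (cases "pleq q r")
  case True
  show ?thesis
  proof (rule subspaceI)
    show "0 \<in> adjoin N q u r" using subset_adjoin subspace_0[OF N] by blast
    show "x + y \<in> adjoin N q u r" if xy: "x \<in> adjoin N q u r" "y \<in> adjoin N q u r" for x y
    proof -
      obtain n1 s1 n2 s2 where n: "n1 \<in> N r" "n2 \<in> N r"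
        and "x = n1 + sc s1 (f q r u)" "y = n2 + sc s2 (f q r u)"
        using adjoin_memE[OF True xy(1)] adjoin_memE[OF True xy(2)] by metis
      then have "x + y = (n1 + n2) + sc (s1 + s2) (f q r u)"
        by (simp add: scale_left_distrib algebra_simps)
      moreover have "n1 + n2 \<in> N r" using subspace_add[OF N n] .
      ultimately show ?thesis using adjoin_memI[OF True] by simp
    qed
    show "sc c x \<in> adjoin N q u r" if x: "x \<in> adjoin N q u r" for c x
    proof -
      obtain n s where n: "n \<in> N r" and "x = n + sc s (f q r u)" using adjoin_memE[OF True x] by metis
      then have "sc c x = sc c n + sc (c * s) (f q r u)" by (simp add: scale_right_distrib)
      moreover have "sc c n \<in> N r" using subspace_scale[OF N n] .
      ultimately show ?thesis using adjoin_memI[OF True] by simp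
    qed
  qed
qed (simp add: adjoin_def N)

lemma submod_adjoin:
  assumes N: "submod sc V f N" and u: "u \<in> V q"
  shows "submod sc V f (adjoin N q u)"
proof -
  have N_V: "N r \<subseteq> V r" and N_sub: "subspace (N r)"
    and N_f: "pleq r r' \<Longrightarrow> f r r' ` N r \<subseteq> N r'" for r r'
    using N unfolding submod_def by blast+
  have "adjoin N q u r \<subseteq> V r" for r
  proof (cases "pleq q r")
    case True
    show ?thesis
    proof
      fix x assume "x \<in> adjoin N q u r"
      then obtain n s where "n \<in> N r" "x = n + sc s (f q r u)" using adjoin_memE[OF True] by metis
      then show "x \<in> V r"
        using N_V subspace_add[OF V_subspace] subspace_scale[OF V_subspace f_maps[OF True u]] by blast
    qed
  qed (simp add: adjoin_def N_V)
  moreover have "f r r' ` adjoin N q u r \<subseteq> adjoin N q u r'" if rr: "pleq r r'" for r r'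
  proof
    fix y assume "y \<in> f r r' ` adjoin N q u r"
    then obtain x where x: "x \<in> adjoin N q u r" "y = f r r' x" by blast
    show "y \<in> adjoin N q u r'"
    proof (cases "pleq q r")
      case True
      then obtain n s where ns: "n \<in> N r" "x = n + sc s (f q r u)" using adjoin_memE x(1) by metis
      have fu: "f q r u \<in> V r" using f_maps[OF True u] .
      have nV: "n \<in> V r" using N_V ns(1) by blast
      have "y = f r r' n + sc s (f q r' u)"
        using ns x(2) f_add[OF rr nV subspace_scale[OF V_subspace fu]] f_scale[OF rr fu]
          f_comp[OF True rr u] by simp
      then show ?thesis using adjoin_memI[OF pleq_trans[OF True rr]] N_f[OF rr] ns(1) by blast
    next
      case False
      then have "x \<in> N r" using x(1) by (simp add: adjoin_def)
      then have "y \<in> N r'" using x(2) N_f[OF rr] by blast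
      then show ?thesis using subset_adjoin by blast
    qed
  qed
  ultimately show ?thesis unfolding submod_def using subspace_adjoin[where N = N, OF N_sub] by blast
qed

lemma line_complement_adjoin:
  assumes N: "line_complement e N" and u: "u \<in> V q"
    and avoid: "\<And>r d n. pleq q r \<Longrightarrow> n \<in> N r \<Longrightarrow> f q r u = sc d (e r) + n \<Longrightarrow> sc d (e r) = 0"
  shows "line_complement e (adjoin N q u)"
proof -
  have "x = 0" if x: "x \<in> adjoin N q u r" "x = sc d (e r)" for x r d
  proof (cases "pleq q r")
    case True
    then obtain n s where ns: "n \<in> N r" "x = n + sc s (f q r u)" using adjoin_memE x(1) by metis
    show ?thesis
    proof (cases "s = 0")
      case True
      then have "x \<in> N r" using ns by simp
      then show ?thesis using line_complement_disjoint[OF N _ x(2)] by simp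
    next
      case False
      have h: "sc s (f q r u) = sc d (e r) - n" using ns(2) x(2) by (simp add: algebra_simps)
      have "f q r u = sc (inverse s) (sc s (f q r u))" using False by simp
      also have "\<dots> = sc (inverse s) (sc d (e r)) - sc (inverse s) n"
        unfolding h by (rule scale_right_diff_distrib)
      also have "\<dots> = sc (d / s) (e r) + sc (- inverse s) n"
        by (simp add: divide_inverse mult.commute)
      finally have "sc (d / s) (e r) = 0"
        using avoid[OF True subspace_scale[OF line_complement_subspace[OF N] ns(1)]] by blast
      then show ?thesis using x(2) False by (simp add: divide_inverse)
    qed
  next
    case False
    then have "x \<in> N r" using x(1) by (simp add: adjoin_def)
    then show ?thesis using line_complement_disjoint[OF N _ x(2)] by simp
  qed
  then have "adjoin N q u r \<inter> section_line e r = {0}" for r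
    using subspace_0[OF subspace_adjoin[where N = N, OF line_complement_subspace[OF N]]]
      subspace_0[OF section_line_subspace] unfolding section_line_def by blast
  then show ?thesis
    using submod_adjoin[OF _ u] N unfolding line_complement_def by blast
qed

text \<open>Two ways of reaching the line from \<open>w\<close> modulo \<open>N\<close> meet again at the join of their
targets, where the line is still nonzero; so the coefficients agree.\<close>

lemma line_coefficient_unique:
  assumes e: "global_section e" and N: "line_complement e N"
    and join: "\<And>q r. e q \<noteq> 0 \<Longrightarrow> e r \<noteq> 0 \<Longrightarrow> e (max (fst q) (fst r), max (snd q) (snd r)) \<noteq> 0"
    and w: "w \<in> V q"
    and r1: "pleq q r1" "e r1 \<noteq> 0" "n1 \<in> N r1" "f q r1 w = sc c1 (e r1) + n1"
    and r2: "pleq q r2" "e r2 \<noteq> 0" "n2 \<in> N r2" "f q r2 w = sc c2 (e r2) + n2"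
  shows "c1 = c2"
proof -
  define m where "m = (max (fst r1) (fst r2), max (snd r1) (snd r2))"
  have m: "pleq r1 m" "pleq r2 m" by (auto simp: m_def pleq_def)
  have image_at_m: "f q m w = sc c (e m) + f r m n"
    if r: "pleq q r" "n \<in> N r" "f q r w = sc c (e r) + n" and rm: "pleq r m" for r n c
  proof -
    have nV: "n \<in> V r" using line_complement_V[OF N] r(2) by blast
    have "f q m w = f r m (f q r w)" using f_comp[OF r(1) rm w] by simp
    also have "\<dots> = sc c (e m) + f r m n"
      using r(3) f_add[OF rm subspace_scale[OF V_subspace global_section_V[OF e]] nV]
        f_scale[OF rm global_section_V[OF e]] global_section_f[OF e rm] by simp
    finally show ?thesis .
  qed
  have "sc (c1 - c2) (e m) = f r2 m n2 - f r1 m n1"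
    using image_at_m[OF r1(1,3,4) m(1)] image_at_m[OF r2(1,3,4) m(2)]
    by (simp add: scale_left_diff_distrib algebra_simps)
  moreover have "f r2 m n2 - f r1 m n1 \<in> N m"
    using subspace_diff[OF line_complement_subspace[OF N]]
      line_complement_f[OF N m(2) r2(3)] line_complement_f[OF N m(1) r1(3)] by blast
  ultimately have "sc (c1 - c2) (e m) = 0" using line_complement_disjoint[OF N] by metis
  moreover have "e m \<noteq> 0" unfolding m_def by (rule join[OF r1(2) r2(2)])
  ultimately show ?thesis by simp
qed

lemma maximal_line_complement_spans:
  assumes e: "global_section e"
    and join: "\<And>q r. e q \<noteq> 0 \<Longrightarrow> e r \<noteq> 0 \<Longrightarrow> e (max (fst q) (fst r), max (snd q) (snd r)) \<noteq> 0"
    and N: "line_complement e N" and N_max: "\<And>N'. line_complement e N' \<Longrightarrow> N \<le> N' \<Longrightarrow> N' = N"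
    and w: "w \<in> V q"
  shows "\<exists>a\<in>section_line e q. \<exists>b\<in>N q. w = a + b"
proof (rule ccontr)
  assume not_sum: "\<not> (\<exists>a\<in>section_line e q. \<exists>b\<in>N q. w = a + b)"
  obtain t where t: "\<And>r c n. pleq q r \<Longrightarrow> e r \<noteq> 0 \<Longrightarrow> n \<in> N r
    \<Longrightarrow> f q r w = sc c (e r) + n \<Longrightarrow> c = t"
  proof (cases "\<exists>r c n. pleq q r \<and> e r \<noteq> 0 \<and> n \<in> N r \<and> f q r w = sc c (e r) + n")
    case True
    then obtain r0 c0 n0 where "pleq q r0" "e r0 \<noteq> 0" "n0 \<in> N r0" "f q r0 w = sc c0 (e r0) + n0"
      by blast
    then show ?thesis using that line_coefficient_unique[OF e N join w] by metis
  qed blast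
  txt \<open>Then \<open>u\<close> has no component on the line anywhere above \<open>q\<close>, so \<open>N\<close> can be enlarged by it.\<close>
  define u where "u = w - sc t (e q)"
  have u: "u \<in> V q" unfolding u_def
    using subspace_diff[OF V_subspace w subspace_scale[OF V_subspace global_section_V[OF e]]] .
  have "sc d (e r) = 0" if r: "pleq q r" "n \<in> N r" "f q r u = sc d (e r) + n" for r d n
  proof (cases "e r = 0")
    case False
    have "f q r u = f q r w - sc t (e r)"
      unfolding u_def using f_diff[OF r(1) w subspace_scale[OF V_subspace global_section_V[OF e]]]
        f_scale[OF r(1) global_section_V[OF e]] global_section_f[OF e r(1)] by simp
    then have "f q r w = sc (t + d) (e r) + n" using r(3) by (simp add: scale_left_distrib algebra_simps)
    then have "t + d = t" using t[OF r(1) False r(2)] by blast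
    then show ?thesis by simp
  qed simp
  then have "line_complement e (adjoin N q u)" by (rule line_complement_adjoin[OF N u])
  moreover have "N \<le> adjoin N q u" using subset_adjoin by (simp add: le_fun_def)
  ultimately have "adjoin N q u = N" by (rule N_max)
  moreover have "u \<in> adjoin N q u q"
    using adjoin_memI[where N = N and n = 0 and s = 1 and u = u and q = q and r = q, OF pleq_refl
        subspace_0[OF line_complement_subspace[OF N]]] f_id[OF u]
    by simp
  ultimately have "u \<in> N q" by simp
  moreover have "w = sc t (e q) + u" by (simp add: u_def)
  ultimately show False using not_sum unfolding section_line_def by blast
qed

lemma indecomposable_section_line:
  assumes ind: "indecomposable sc V f" and e: "global_section e" and ne: "e p \<noteq> 0"
    and join: "\<And>q r. e q \<noteq> 0 \<Longrightarrow> e r \<noteq> 0 \<Longrightarrow> e (max (fst q) (fst r), max (snd q) (snd r)) \<noteq> 0"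
  shows "V q = section_line e q"
proof -
  obtain N where N: "line_complement e N" and N_max: "\<And>N'. line_complement e N' \<Longrightarrow> N \<le> N' \<Longrightarrow> N' = N"
    using maximal_line_complement_exists[of e] by blast
  have spans: "\<forall>v\<in>V p. \<exists>a\<in>section_line e p. \<exists>b\<in>N p. v = a + b" for p
    using maximal_line_complement_spans[OF e join N N_max] by blast
  have "nonzero_mod (section_line e)"
    unfolding nonzero_mod_def section_line_def using ne by (metis rangeI scale_one singletonD)
  then have "\<not> nonzero_mod N"
    using ind section_line_submod[OF e] N spans
    unfolding indecomposable_def line_complement_def by (metis inf_commute)
  then have "N q = {0}"
    using subspace_0[OF line_complement_subspace[OF N]] unfolding nonzero_mod_def by blast
  then show ?thesis
    using spans[of q] section_line_subset_V[OF e, of q] by auto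
qed

definition line_coord :: "('s \<times> 't \<Rightarrow> 'v) \<Rightarrow> 's \<times> 't \<Rightarrow> 'v \<Rightarrow> 'k" where
  "line_coord e q w = (if e q \<noteq> 0 then (SOME c. w = sc c (e q)) else 0)"

lemma line_coord_scale: "e q \<noteq> 0 \<Longrightarrow> line_coord e q (sc c (e q)) = c"
  unfolding line_coord_def by (auto intro: some_equality)

context
  fixes e :: "'s \<times> 't \<Rightarrow> 'v"
  assumes e: "global_section e" and V_line: "\<And>q. V q = section_line e q"
begin

lemma V_line_form: "w \<in> V q \<Longrightarrow> \<exists>c. w = sc c (e q)"
  using V_line[of q] unfolding section_line_def by blast

lemma line_coord_bij: "bij_betw (line_coord e q) (V q) (kB_space {q. e q \<noteq> 0} q)"
proof (cases "e q = 0")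
  case True
  then have "V q = {0}" using V_line[of q] unfolding section_line_def by auto
  then show ?thesis using True by (simp add: bij_betw_def kB_space_def line_coord_def)
next
  case False
  have "inj_on (line_coord e q) (V q)"
  proof (rule inj_onI)
    fix x y assume xy: "x \<in> V q" "y \<in> V q" and eq: "line_coord e q x = line_coord e q y"
    obtain a b where "x = sc a (e q)" "y = sc b (e q)" using V_line_form xy by blast
    then show "x = y" using eq line_coord_scale[of e q, OF False] by simp
  qed
  moreover have "c \<in> line_coord e q ` V q" for c
  proof (rule rev_image_eqI)
    show "sc c (e q) \<in> V q" using subspace_scale[OF V_subspace global_section_V[OF e]] .
  qed (simp add: line_coord_scale[of e q, OF False])
  then have "line_coord e q ` V q = UNIV" by blast
  ultimately show ?thesis using False by (simp add: bij_betw_def kB_space_def)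
qed

lemma line_coord_lin: "lin_on sc (*) (V q) (line_coord e q)"
  unfolding lin_on_def
proof (intro conjI ballI allI)
  fix x y assume "x \<in> V q" "y \<in> V q"
  then obtain a b where ab: "x = sc a (e q)" "y = sc b (e q)" using V_line_form by blast
  then have "x + y = sc (a + b) (e q)" by (simp add: scale_left_distrib)
  then show "line_coord e q (x + y) = line_coord e q x + line_coord e q y"
    using ab line_coord_scale by (cases "e q = 0") (simp_all add: line_coord_def)
next
  fix c :: 'k and x assume "x \<in> V q"
  then obtain a where a: "x = sc a (e q)" using V_line_form by blast
  then have "sc c x = sc (c * a) (e q)" by simp
  then show "line_coord e q (sc c x) = c * line_coord e q x"
    using a line_coord_scale by (cases "e q = 0") (simp_all add: line_coord_def)
qed

lemma line_coord_commute:
  assumes pq: "pleq p q" and v: "v \<in> V p"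
  shows "line_coord e q (f p q v) = kB_map {q. e q \<noteq> 0} p q (line_coord e p v)"
proof -
  obtain a where a: "v = sc a (e p)" using V_line_form[OF v] by blast
  have fv: "f p q v = sc a (e q)"
    using a f_scale[OF pq global_section_V[OF e]] global_section_f[OF e pq] by simp
  show ?thesis
  proof (cases "e p = 0")
    case True
    then have "e q = 0" using global_section_f[OF e pq] pq by simp
    then show ?thesis using True by (simp add: line_coord_def kB_map_def)
  next
    case False
    then show ?thesis
      using fv a line_coord_scale by (cases "e q = 0") (simp_all add: line_coord_def kB_map_def)
  qed
qed

lemma section_line_iso:
  "pmod_iso sc V f ((*) :: 'k \<Rightarrow> 'k \<Rightarrow> 'k) (kB_space {q. e q \<noteq> 0}) (kB_map {q. e q \<noteq> 0})"
  unfolding pmod_iso_def using line_coord_bij line_coord_lin line_coord_commute by blast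

end

lemma zero_in_im_left_ker_right: "0 \<in> im_left V f p \<inter> ker_right V f p"
proof
  have "0 \<in> f (q, snd p) p ` V (q, snd p)" if "q \<le> fst p" for q
  proof (rule rev_image_eqI)
    show "0 = f (q, snd p) p 0" using that by (simp add: pleq_def)
  qed simp
  then show "0 \<in> im_left V f p" unfolding im_left_def by blast
  show "0 \<in> ker_right V f p" by (rule ker_rightI[of p "fst p"]) simp_all
qed

lemma zero_in_im_down_ker_up: "0 \<in> im_down V f p \<inter> ker_up V f p"
proof
  have "0 \<in> f (fst p, q) p ` V (fst p, q)" if "q \<le> snd p" for q
  proof (rule rev_image_eqI)
    show "0 = f (fst p, q) p 0" using that by (simp add: pleq_def)
  qed simp
  then show "0 \<in> im_down V f p" unfolding im_down_def by blast
  show "0 \<in> ker_up V f p"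
    unfolding ker_up_def using V_0 f_0 by (cases p) auto
qed

lemma exists_db_section:
  assumes pfd: "pfd sc V"
    and exact: "\<And>x x' y y'. x \<le> x' \<Longrightarrow> y \<le> y' \<Longrightarrow> square_exact V f x x' y y'"
    and "(\<exists>p. im_left V f p \<inter> ker_right V f p \<noteq> {0}) \<or> (\<exists>p. im_down V f p \<inter> ker_up V f p \<noteq> {0})"
  shows "\<exists>e. global_section e \<and> db_block {q. e q \<noteq> 0}"
  using assms(3)
proof (elim disjE exE)
  fix p assume "im_left V f p \<inter> ker_right V f p \<noteq> {0}"
  then obtain v where "v \<in> im_left V f p" "v \<in> ker_right V f p" "v \<noteq> 0"
    using zero_in_im_left_ker_right by blast
  then show ?thesis using exists_db_section_left[OF pfd exact] by blast
next
  fix p assume "im_down V f p \<inter> ker_up V f p \<noteq> {0}"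
  then obtain v where "v \<in> im_down V f p" "v \<in> ker_up V f p" "v \<noteq> 0"
    using zero_in_im_down_ker_up by blast
  then show ?thesis using exists_db_section_down[OF pfd exact] by blast
qed

lemma interval_module_of_section:
  assumes ind: "indecomposable sc V f" and e: "global_section e" "db_block {q. e q \<noteq> 0}"
  shows "\<exists>B. db_block B \<and> pmod_iso sc V f ((*) :: 'k \<Rightarrow> 'k \<Rightarrow> 'k) (kB_space B) (kB_map B)"
proof -
  obtain p where "e p \<noteq> 0" using db_block_nonempty[OF e(2)] by blast
  then have "V q = section_line e q" for q
    using indecomposable_section_line[OF ind e(1)] db_block_join[OF e(2)] by blast
  then show ?thesis using section_line_iso[OF e(1)] e(2) by blast
qed

end

theorem lemma5p8:
  fixes sc :: "'k::field \<Rightarrow> 'v::ab_group_add \<Rightarrow> 'v"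
    and V :: "'s::linorder \<times> 't::linorder \<Rightarrow> 'v set"
    and f :: "'s \<times> 't \<Rightarrow> 's \<times> 't \<Rightarrow> 'v \<Rightarrow> 'v"
  assumes "pmod sc V f"
    and "pfd sc V"
    and "indecomposable sc V f"
    and "\<And>x x' y y'. x \<le> x' \<Longrightarrow> y \<le> y' \<Longrightarrow> square_exact V f x x' y y'"
    and "(\<exists>p. im_left V f p \<inter> ker_right V f p \<noteq> {0}) \<or>
         (\<exists>p. im_down V f p \<inter> ker_up V f p \<noteq> {0})"
  shows "\<exists>B. db_block B \<and> pmod_iso sc V f ((*) :: 'k \<Rightarrow> 'k \<Rightarrow> 'k) (kB_space B) (kB_map B)"
proof -
  interpret persistence_module sc V f by unfold_locales (fact assms(1))
  obtain e where "global_section e" "db_block {q. e q \<noteq> 0}"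
    using exists_db_section[OF assms(2,4,5)] by blast
  then show ?thesis by (rule interval_module_of_section[OF assms(3)])
qed

end
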